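(* Let $G$ be the automorphism group of $(\mathbb{Q},<)$ and let $f \in G$. Then there do NOT exist $g, g_1, g_2 \in G$ such that $g$ is a restriction of $f$, $g_1$ is a bump which is an orbital of $g$, $g = g_1 g_2$, and $g$ is conjugate in $G$ to $g_2$, if and only if $f$ has only finitely many non-trivial orbitals.
   Context: For $f \in G$, an orbital of $f$ is an equivalence class of $\mathbb{Q}$ under $a \sim b$ iff there are integers $m,n$ with $f^m a \le b \le f^n a$; it is non-trivial if it has more than one point. The support of an element of $G$ is the set of points it moves. A bump is a non-identity element of $G$ with exactly one non-trivial orbital. An element $g$ is a restriction of $f$ if the support of $g$ is contained in that of $f$ and $g$ agrees with $f$ on the support of $g$. An element $g_1$ is an orbital of $g$ if $g_1$ is a bump whose support is contained in that of $g$ and $g_1$ agrees with $g$ on its support. *)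

theory Defs
  imports Complex_Main
begin

definition AutQ :: "(rat \<Rightarrow> rat) set" where
  "AutQ = {f. bij f \<and> strict_mono f}"

definition ipow :: "(rat \<Rightarrow> rat) \<Rightarrow> int \<Rightarrow> (rat \<Rightarrow> rat)" where
  "ipow f n = (if 0 \<le> n then f ^^ nat n else (inv f) ^^ nat (- n))"

definition orbital_at :: "(rat \<Rightarrow> rat) \<Rightarrow> rat \<Rightarrow> rat set" where
  "orbital_at f a = {b. \<exists>m n :: int. ipow f m a \<le> b \<and> b \<le> ipow f n a}"

definition orbitals :: "(rat \<Rightarrow> rat) \<Rightarrow> rat set set" where
  "orbitals f = range (orbital_at f)"

definition nontrivial_orbitals :: "(rat \<Rightarrow> rat) \<Rightarrow> rat set set" where
  "nontrivial_orbitals f = {U \<in> orbitals f. \<exists>x y. x \<in> U \<and> y \<in> U \<and> x \<noteq> y}"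

definition supp :: "(rat \<Rightarrow> rat) \<Rightarrow> rat set" where
  "supp f = {x. f x \<noteq> x}"

definition is_bump :: "(rat \<Rightarrow> rat) \<Rightarrow> bool" where
  "is_bump f \<longleftrightarrow> f \<in> AutQ \<and> f \<noteq> id \<and> (\<exists>!U. U \<in> nontrivial_orbitals f)"

definition is_restriction :: "(rat \<Rightarrow> rat) \<Rightarrow> (rat \<Rightarrow> rat) \<Rightarrow> bool" where
  "is_restriction g f \<longleftrightarrow> supp g \<subseteq> supp f \<and> (\<forall>x \<in> supp g. g x = f x)"

definition is_orbital_elem :: "(rat \<Rightarrow> rat) \<Rightarrow> (rat \<Rightarrow> rat) \<Rightarrow> bool" where
  "is_orbital_elem g1 g \<longleftrightarrow> is_bump g1 \<and> supp g1 \<subseteq> supp g \<and> (\<forall>x \<in> supp g1. g1 x = g x)"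

definition conj_in_AutQ :: "(rat \<Rightarrow> rat) \<Rightarrow> (rat \<Rightarrow> rat) \<Rightarrow> bool" where
  "conj_in_AutQ a b \<longleftrightarrow> (\<exists>h \<in> AutQ. b = inv h \<circ> a \<circ> h)"

end

theory Submission
  imports Defs "HOL-Library.Countable" "HOL-Library.Extended_Nat"
begin

text \<open>
  If \<open>f\<close> has finitely many nontrivial orbitals, then so has every restriction \<open>g\<close> of \<open>f\<close>.
  Splitting off an orbital \<open>g1\<close> of \<open>g\<close> leaves a cofactor \<open>g2\<close> with one orbital less than
  \<open>g\<close>, whereas conjugate elements have equally many orbitals.

  If \<open>f\<close> has infinitely many nontrivial orbitals, infinitely many of them share a type
  (direction of motion, and whether the rays below and above them have an endpoint) and
  form a monotone sequence; by the reflection \<open>x \<mapsto> -x\<close> it may be taken increasing.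
  Keep every other orbital, \<open>U 0 < U 1 < \<dots>\<close>, so that the gaps between them are
  nondegenerate.  Let \<open>g\<close> restrict \<open>f\<close> to all \<open>U i\<close>, \<open>g1\<close> to \<open>U 0\<close> and \<open>g2\<close> to the others.
  An automorphism of \<open>\<rat>\<close> carrying \<open>U (i+1)\<close> onto \<open>U i\<close> while conjugating \<open>f\<close>, each gap
  onto the previous one, and fixing everything above all \<open>U i\<close>, conjugates \<open>g2\<close> to \<open>g\<close>.
  It exists because any two orbitals moving in the same direction are conjugate, and any
  two convex sets of rationals with at least two points are order isomorphic as soon as
  they agree on having a least and a greatest element.
\<close>

lemma AutQ_bij: "f \<in> AutQ \<Longrightarrow> bij f"
  and AutQ_strict_mono: "f \<in> AutQ \<Longrightarrow> strict_mono f"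
  by (simp_all add: AutQ_def)

lemma AutQI: "strict_mono f \<Longrightarrow> surj f \<Longrightarrow> f \<in> AutQ"
  by (simp add: AutQ_def bij_def strict_mono_imp_inj_on)

lemma inv_AutQ:
  assumes "f \<in> AutQ" shows "inv f \<in> AutQ"
proof -
  have "strict_mono (inv f)"
    by (rule strict_mono_inv[of f])
      (simp_all add: assms AutQ_strict_mono AutQ_bij bij_is_surj bij_is_inj)
  with assms show ?thesis by (simp add: AutQ_def bij_imp_bij_inv)
qed

lemma AutQ_less_iff: "f \<in> AutQ \<Longrightarrow> f x < f y \<longleftrightarrow> x < y"
  and AutQ_le_iff: "f \<in> AutQ \<Longrightarrow> f x \<le> f y \<longleftrightarrow> x \<le> y"
  by (simp_all add: AutQ_strict_mono strict_mono_less strict_mono_less_eq)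

lemma ipow_0 [simp]: "ipow f 0 = id"
  by (simp add: ipow_def)

lemma ipow_succ: "bij f \<Longrightarrow> ipow f (n + 1) = f \<circ> ipow f n"
proof (cases "n \<ge> 0")
  case True
  then have "nat (n + 1) = Suc (nat n)" by simp
  with True show ?thesis by (simp add: ipow_def)
next
  case False
  assume "bij f"
  then have f_inv: "f \<circ> inv f = id" using surj_iff bij_is_surj by blast
  show ?thesis
  proof (cases "n = -1")
    case True
    with f_inv show ?thesis by (simp add: ipow_def)
  next
    case False
    with \<open>\<not> n \<ge> 0\<close> have "nat (- n) = Suc (nat (- (n + 1)))" by simp
    with \<open>\<not> n \<ge> 0\<close> False have "ipow f n = inv f \<circ> ipow f (n + 1)" by (simp add: ipow_def)
    with f_inv show ?thesis by (simp add: comp_assoc[symmetric])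
  qed
qed

lemma ipow_pred: "bij f \<Longrightarrow> ipow f (n - 1) = inv f \<circ> ipow f n"
  using ipow_succ[of f "n - 1"] by (simp add: bij_is_inj comp_assoc[symmetric])

lemma ipow_add: "bij f \<Longrightarrow> ipow f (m + n) = ipow f m \<circ> ipow f n"
proof (induction m rule: int_induct[where k = 0])
  case (step1 i)
  then show ?case using ipow_succ[of f "i + n"] ipow_succ[of f i] by (simp add: ac_simps)
next
  case (step2 i)
  then show ?case using ipow_pred[of f "i + n"] ipow_pred[of f i] by (simp add: algebra_simps)
qed simp

lemma ipow_1: "bij f \<Longrightarrow> ipow f 1 = f"
  using ipow_succ[of f 0] by simp

lemma ipow_neg_cancel: "bij f \<Longrightarrow> ipow f (- n) (ipow f n x) = x"
  using ipow_add[of f "- n" n] by (simp add: fun_eq_iff)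

lemma ipow_AutQ: "f \<in> AutQ \<Longrightarrow> ipow f n \<in> AutQ"
proof -
  have "g ^^ k \<in> AutQ" if "g \<in> AutQ" for g k
    using that by (induction k) (auto simp: AutQ_def bij_comp strict_mono_def)
  then show "f \<in> AutQ \<Longrightarrow> ipow f n \<in> AutQ"
    using inv_AutQ by (simp add: ipow_def)
qed

lemma ipow_inv: "bij f \<Longrightarrow> ipow (inv f) n = ipow f (- n)"
  by (simp add: ipow_def inv_inv_eq)

lemma ipow_conj:
  assumes "bij g" "bij g'" and conj: "\<And>x. \<rho> (g' x) = g (\<rho> x)"
  shows "ipow g n (\<rho> x) = \<rho> (ipow g' n x)"
proof -
  have inv_conj: "inv g (\<rho> x) = \<rho> (inv g' x)" for x
    using conj[of "inv g' x"] assms(1,2) by (simp add: bij_is_surj surj_f_inv_f bij_is_inj)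
  show ?thesis
  proof (induction n rule: int_induct[where k = 0])
    case (step1 i)
    then show ?case by (simp add: ipow_succ assms conj)
  next
    case (step2 i)
    then show ?case by (simp add: ipow_pred assms inv_conj)
  qed simp
qed

section \<open>Orbitals\<close>

definition ord_convex :: "'a::order set \<Rightarrow> bool" where
  "ord_convex S \<longleftrightarrow> (\<forall>x\<in>S. \<forall>z\<in>S. \<forall>y. x \<le> y \<and> y \<le> z \<longrightarrow> y \<in> S)"

definition set_less :: "'a::order set \<Rightarrow> 'a set \<Rightarrow> bool" where
  "set_less A B \<longleftrightarrow> (\<forall>x\<in>A. \<forall>y\<in>B. x < y)"

definition orbital_saturated :: "(rat \<Rightarrow> rat) \<Rightarrow> rat set \<Rightarrow> bool" where
  "orbital_saturated f S \<longleftrightarrow> (\<forall>x\<in>S. orbital_at f x \<subseteq> S)"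

lemma ord_convexD: "ord_convex S \<Longrightarrow> x \<in> S \<Longrightarrow> z \<in> S \<Longrightarrow> x \<le> y \<Longrightarrow> y \<le> z \<Longrightarrow> y \<in> S"
  unfolding ord_convex_def by blast

lemma ipow_mem_orbital_at: "ipow f n a \<in> orbital_at f a"
  unfolding orbital_at_def by blast

lemma orbital_at_refl: "a \<in> orbital_at f a"
  using ipow_mem_orbital_at[of f 0 a] by simp

lemma apply_mem_orbital_at: "f \<in> AutQ \<Longrightarrow> f a \<in> orbital_at f a"
  and inv_apply_mem_orbital_at: "f \<in> AutQ \<Longrightarrow> inv f a \<in> orbital_at f a"
  using ipow_mem_orbital_at[of f 1 a] ipow_mem_orbital_at[of f "-1" a]
    ipow_1[of f] ipow_pred[of f 0] by (simp_all add: AutQ_bij)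

lemma ord_convex_orbital_at: "ord_convex (orbital_at f a)"
  unfolding ord_convex_def orbital_at_def by (blast intro: order_trans)

lemma orbital_at_sym:
  assumes f: "f \<in> AutQ" and "b \<in> orbital_at f a"
  shows "a \<in> orbital_at f b"
proof -
  obtain m n where "ipow f m a \<le> b" "b \<le> ipow f n a"
    using assms(2) by (auto simp: orbital_at_def)
  then have "ipow f (- n) b \<le> a" "a \<le> ipow f (- m) b"
    using AutQ_le_iff[OF ipow_AutQ[OF f]] ipow_neg_cancel[OF AutQ_bij[OF f]] by metis+
  then show ?thesis by (auto simp: orbital_at_def)
qed

lemma orbital_at_trans:
  assumes f: "f \<in> AutQ" and "b \<in> orbital_at f a" "c \<in> orbital_at f b"
  shows "c \<in> orbital_at f a"
proof -
  obtain m n where mn: "ipow f m a \<le> b" "b \<le> ipow f n a"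
    using assms(2) by (auto simp: orbital_at_def)
  obtain p q where pq: "ipow f p b \<le> c" "c \<le> ipow f q b"
    using assms(3) by (auto simp: orbital_at_def)
  have "ipow f (p + m) a \<le> ipow f p b" "ipow f q b \<le> ipow f (q + n) a"
    using mn AutQ_le_iff[OF ipow_AutQ[OF f]] by (simp_all add: ipow_add AutQ_bij[OF f])
  with pq show ?thesis by (auto simp: orbital_at_def intro: order_trans)
qed

lemma orbital_at_eq: "f \<in> AutQ \<Longrightarrow> b \<in> orbital_at f a \<Longrightarrow> orbital_at f b = orbital_at f a"
  using orbital_at_sym orbital_at_trans by blast

lemma orbital_at_disjoint:
  "f \<in> AutQ \<Longrightarrow> orbital_at f a \<noteq> orbital_at f b \<Longrightarrow> orbital_at f a \<inter> orbital_at f b = {}"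
  using orbital_at_eq by blast

lemma orbital_at_apply_closed: "f \<in> AutQ \<Longrightarrow> x \<in> orbital_at f a \<Longrightarrow> f x \<in> orbital_at f a"
  using orbital_at_eq apply_mem_orbital_at by blast

lemma apply_less_if_notin_orbital_at:
  assumes f: "f \<in> AutQ" and "x < y" "y \<notin> orbital_at f x"
  shows "f x < y"
  using assms
    ord_convexD[OF ord_convex_orbital_at orbital_at_refl apply_mem_orbital_at[OF f], of x y]
  by (meson less_imp_le not_less)

lemma less_apply_if_notin_orbital_at:
  assumes f: "f \<in> AutQ" and "x < y" "x \<notin> orbital_at f y"
  shows "x < f y"
  using assms
    ord_convexD[OF ord_convex_orbital_at apply_mem_orbital_at[OF f] orbital_at_refl, of y x]
  by (meson less_imp_le not_less)

lemma orbital_saturated_orbital_at: "f \<in> AutQ \<Longrightarrow> orbital_saturated f (orbital_at f a)"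
  unfolding orbital_saturated_def using orbital_at_eq by blast

lemma orbital_at_subset_or_disjoint:
  assumes "f \<in> AutQ" "orbital_saturated f S"
  shows "orbital_at f x \<subseteq> S \<or> orbital_at f x \<inter> S = {}"
  using assms orbital_at_eq unfolding orbital_saturated_def by blast

lemma orbital_at_fixed:
  assumes f: "f \<in> AutQ" and fix_x: "f x = x"
  shows "orbital_at f x = {x}"
proof -
  have inv_x: "inv f x = x"
    using fix_x AutQ_bij[OF f] by (metis bij_is_inj inv_f_f)
  have "ipow f n x = x" for n
    by (induction n rule: int_induct[where k = 0])
      (simp_all add: ipow_succ ipow_pred AutQ_bij[OF f] fix_x inv_x)
  then show ?thesis by (auto simp: orbital_at_def)
qed

lemma orbital_at_subset_supp:
  assumes f: "f \<in> AutQ" and x: "x \<in> supp f"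
  shows "orbital_at f x \<subseteq> supp f"
proof
  fix y assume y: "y \<in> orbital_at f x"
  show "y \<in> supp f"
  proof (rule ccontr)
    assume "y \<notin> supp f"
    then have "orbital_at f x = {y}"
      using orbital_at_fixed[OF f] orbital_at_eq[OF f y] by (simp add: supp_def)
    then show False
      using x apply_mem_orbital_at[OF f] orbital_at_refl[of x f] by (auto simp: supp_def)
  qed
qed

lemma nontrivial_orbitals_eq:
  assumes f: "f \<in> AutQ"
  shows "nontrivial_orbitals f = orbital_at f ` supp f"
proof -
  have "(\<exists>x y. x \<in> orbital_at f a \<and> y \<in> orbital_at f a \<and> x \<noteq> y) \<longleftrightarrow> a \<in> supp f" for a
    using orbital_at_fixed[OF f, of a] orbital_at_refl[of a f] apply_mem_orbital_at[OF f, of a]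
    by (auto simp: supp_def)
  moreover have "orbital_at f a \<in> orbital_at f ` supp f \<longleftrightarrow> a \<in> supp f" for a
    using orbital_at_subset_supp[OF f] orbital_at_sym[OF f] orbital_at_refl by blast
  ultimately show ?thesis
    by (auto simp: nontrivial_orbitals_def orbitals_def)
qed

lemma orbital_at_set_less:
  assumes "f \<in> AutQ" "x < y" "orbital_at f x \<noteq> orbital_at f y"
  shows "set_less (orbital_at f x) (orbital_at f y)"
  unfolding set_less_def
proof (intro ballI)
  fix u v assume uv: "u \<in> orbital_at f x" "v \<in> orbital_at f y"
  have disj: "orbital_at f x \<inter> orbital_at f y = {}"
    using orbital_at_disjoint assms by blast
  show "u < v"
  proof (rule ccontr)
    assume "\<not> u < v"
    then consider "y \<in> orbital_at f x" | "u \<in> orbital_at f y"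
      using ord_convexD[OF ord_convex_orbital_at orbital_at_refl uv(1), of y]
        ord_convexD[OF ord_convex_orbital_at uv(2) orbital_at_refl, of u] \<open>x < y\<close>
      by fastforce
    then show False
      using disj uv orbital_at_refl by blast
  qed
qed

text \<open>The support of \<open>g\<close> is invariant under \<open>g\<close> and its inverse, so the integer powers of
  \<open>g\<close> and \<open>f\<close> agree on it.\<close>

lemma orbital_at_restriction:
  assumes g: "g \<in> AutQ" and f: "f \<in> AutQ" and r: "is_restriction g f" and x: "x \<in> supp g"
  shows "orbital_at g x = orbital_at f x"
proof -
  have closed: "g y \<in> supp g" "inv g y \<in> supp g" if "y \<in> supp g" for y
    using orbital_at_subset_supp[OF g that] apply_mem_orbital_at[OF g]
      inv_apply_mem_orbital_at[OF g] by blast+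
  have agree: "g y = f y" if "y \<in> supp g" for y
    using r that by (simp add: is_restriction_def)
  have inv_agree: "inv g y = inv f y" if "y \<in> supp g" for y
  proof -
    have "f (inv g y) = y"
      using agree[OF closed(2)[OF that]] AutQ_bij[OF g] by (simp add: bij_is_surj surj_f_inv_f)
    then show ?thesis
      using AutQ_bij[OF f] by (simp add: bij_is_inj inv_f_eq)
  qed
  have "ipow g n x = ipow f n x \<and> ipow g n x \<in> supp g" for n
  proof (induction n rule: int_induct[where k = 0])
    case (step1 i)
    then have "ipow g i x \<in> supp g" "ipow f i x = ipow g i x" by auto
    then show ?case
      using agree closed by (simp add: ipow_succ AutQ_bij g f)
  next
    case (step2 i)
    then have "ipow g i x \<in> supp g" "ipow f i x = ipow g i x" by auto
    then show ?case
      using inv_agree closed by (simp add: ipow_pred AutQ_bij g f)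
  qed (simp add: x)
  then show ?thesis by (simp add: orbital_at_def)
qed

lemma nontrivial_orbitals_restriction:
  assumes g: "g \<in> AutQ" and f: "f \<in> AutQ" and r: "is_restriction g f"
  shows "nontrivial_orbitals g = {U \<in> nontrivial_orbitals f. U \<subseteq> supp g}"
proof -
  have supp: "supp g \<subseteq> supp f"
    using r by (simp add: is_restriction_def)
  have "orbital_at g ` supp g = {U \<in> orbital_at f ` supp f. U \<subseteq> supp g}"
  proof (intro equalityI subsetI)
    fix U assume "U \<in> orbital_at g ` supp g"
    then obtain x where "x \<in> supp g" "U = orbital_at g x" by blast
    then show "U \<in> {U \<in> orbital_at f ` supp f. U \<subseteq> supp g}"
      using orbital_at_restriction[OF g f r] orbital_at_subset_supp[OF g] supp by auto
  next
    fix U assume "U \<in> {U \<in> orbital_at f ` supp f. U \<subseteq> supp g}"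
    then obtain x where "x \<in> supp f" "U = orbital_at f x" "U \<subseteq> supp g" by blast
    then show "U \<in> orbital_at g ` supp g"
      using orbital_at_restriction[OF g f r] orbital_at_refl by (metis image_eqI subsetD)
  qed
  then show ?thesis by (simp add: nontrivial_orbitals_eq f g)
qed

lemma orbital_saturated_supp_restriction:
  assumes "g \<in> AutQ" "f \<in> AutQ" "is_restriction g f"
  shows "orbital_saturated f (supp g)"
  unfolding orbital_saturated_def
  using orbital_at_restriction[OF assms] orbital_at_subset_supp[OF assms(1)] by simp

lemma is_orbital_elem_iff: "is_orbital_elem g1 g \<longleftrightarrow> is_bump g1 \<and> is_restriction g1 g"
  by (simp add: is_orbital_elem_def is_restriction_def)

section \<open>Finitely many orbitals: no conjugate factorization\<close>

lemma cofactor_of_restriction: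
  assumes g: "g \<in> AutQ" and g1: "g1 \<in> AutQ"
    and r: "is_restriction g1 g" and g_eq: "g = g1 \<circ> g2"
  shows "g2 x = (if x \<in> supp g1 then x else g x)"
proof -
  let ?S = "supp g1"
  have sat: "orbital_saturated g ?S"
    using orbital_saturated_supp_restriction[OF g1 g r] .
  show ?thesis
  proof (cases "x \<in> ?S")
    case True
    then have "g1 (g2 x) = g1 x"
      using r g_eq by (simp add: is_restriction_def)
    with True show ?thesis
      using AutQ_bij[OF g1] by (simp add: bij_is_inj inj_eq)
  next
    case False
    have "g x \<notin> ?S"
    proof
      assume "g x \<in> ?S"
      then have "inv g (g x) \<in> ?S"
        using sat inv_apply_mem_orbital_at[OF g] unfolding orbital_saturated_def by blast
      with False show False
        using AutQ_bij[OF g] by (simp add: bij_is_inj)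
    qed
    then have "g1 (g2 x) = g1 (g x)"
      using g_eq by (simp add: supp_def)
    with False show ?thesis
      using AutQ_bij[OF g1] by (simp add: bij_is_inj inj_eq)
  qed
qed

lemma nontrivial_orbitals_cofactor:
  assumes g: "g \<in> AutQ" and g1: "g1 \<in> AutQ" and g2: "g2 \<in> AutQ"
    and r: "is_restriction g1 g" and g_eq: "g = g1 \<circ> g2"
  shows "nontrivial_orbitals g2 = nontrivial_orbitals g - nontrivial_orbitals g1"
proof -
  let ?S = "supp g1"
  have sat: "orbital_saturated g ?S"
    using orbital_saturated_supp_restriction[OF g1 g r] .
  note g2_eq = cofactor_of_restriction[OF g g1 r g_eq]
  have supp2: "supp g2 = supp g - ?S"
  proof (rule set_eqI)
    fix x show "x \<in> supp g2 \<longleftrightarrow> x \<in> supp g - ?S"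
      using g2_eq[of x] by (simp add: supp_def[of g2] supp_def[of g])
  qed
  have r2: "is_restriction g2 g"
    unfolding is_restriction_def
  proof (intro conjI ballI)
    fix x assume "x \<in> supp g2"
    then show "g2 x = g x"
      using supp2 g2_eq[of x] by simp
  qed (simp add: supp2)
  have "U \<subseteq> supp g - ?S \<longleftrightarrow> \<not> U \<subseteq> ?S" if "U \<in> nontrivial_orbitals g" for U
  proof -
    have "U \<in> orbital_at g ` supp g"
      using that nontrivial_orbitals_eq[OF g] by simp
    then obtain x where x: "x \<in> supp g" "U = orbital_at g x" by auto
    have "x \<in> U" "U \<subseteq> supp g" "U \<subseteq> ?S \<or> U \<inter> ?S = {}"
      using orbital_at_refl orbital_at_subset_supp[OF g x(1)]
        orbital_at_subset_or_disjoint[OF g sat, of x] by (simp_all add: x(2))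
    then show ?thesis by blast
  qed
  then show ?thesis
    using nontrivial_orbitals_restriction[OF g2 g r2] nontrivial_orbitals_restriction[OF g1 g r]
    by (auto simp: supp2)
qed

lemma orbital_at_conj:
  assumes g: "g \<in> AutQ" and h: "h \<in> AutQ"
  shows "orbital_at (inv h \<circ> g \<circ> h) x = h -` orbital_at g (h x)"
proof -
  let ?g' = "inv h \<circ> g \<circ> h"
  have "bij ?g'"
    using g h by (simp add: AutQ_bij bij_comp bij_imp_bij_inv)
  moreover have "h (?g' y) = g (h y)" for y
    using AutQ_bij[OF h] by (simp add: bij_is_surj surj_f_inv_f)
  ultimately have "ipow g n (h x) = h (ipow ?g' n x)" for n
    using ipow_conj[of g ?g' h] AutQ_bij[OF g] by blast
  then show ?thesis
    by (auto simp: orbital_at_def AutQ_le_iff[OF h])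
qed

lemma nontrivial_orbitals_conj:
  assumes g: "g \<in> AutQ" and h: "h \<in> AutQ"
  shows "nontrivial_orbitals (inv h \<circ> g \<circ> h) = (\<lambda>U. h -` U) ` nontrivial_orbitals g"
proof -
  let ?g' = "inv h \<circ> g \<circ> h"
  have g': "?g' \<in> AutQ"
    using g h inv_AutQ by (auto simp: AutQ_def bij_comp strict_mono_def)
  have "?g' x = x \<longleftrightarrow> g (h x) = h x" for x
    using bij_inv_eq_iff[OF AutQ_bij[OF h], of x "g (h x)"] by auto
  then have "supp ?g' = h -` supp g"
    by (auto simp: supp_def)
  then have "nontrivial_orbitals ?g' = (\<lambda>x. h -` orbital_at g (h x)) ` (h -` supp g)"
    by (simp add: nontrivial_orbitals_eq g' orbital_at_conj g h)
  also have "\<dots> = (\<lambda>U. h -` U) ` orbital_at g ` (h ` (h -` supp g))"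
    by (simp only: image_image)
  also have "\<dots> = (\<lambda>U. h -` U) ` orbital_at g ` supp g"
    by (simp only: surj_image_vimage_eq[OF bij_is_surj[OF AutQ_bij[OF h]]])
  also have "\<dots> = (\<lambda>U. h -` U) ` nontrivial_orbitals g"
    by (simp add: nontrivial_orbitals_eq g)
  finally show ?thesis .
qed

lemma card_nontrivial_orbitals_conj:
  assumes g: "g \<in> AutQ" and c: "conj_in_AutQ g g2"
  shows "card (nontrivial_orbitals g2) = card (nontrivial_orbitals g)"
proof -
  obtain h where h: "h \<in> AutQ" and g2: "g2 = inv h \<circ> g \<circ> h"
    using c by (auto simp: conj_in_AutQ_def)
  have "inj_on (\<lambda>U. h -` U) (nontrivial_orbitals g)"
    using AutQ_bij[OF h] by (intro inj_onI) (metis bij_is_surj surj_image_vimage_eq)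
  then show ?thesis
    by (simp add: g2 nontrivial_orbitals_conj[OF g h] card_image)
qed

theorem finite_nontrivial_orbitals_no_conjugate_cofactor:
  assumes f: "f \<in> AutQ" and fin: "finite (nontrivial_orbitals f)"
    and g: "g \<in> AutQ" and g1: "g1 \<in> AutQ" and g2: "g2 \<in> AutQ"
    and r: "is_restriction g f" and orb: "is_orbital_elem g1 g"
    and g_eq: "g = g1 \<circ> g2" and c: "conj_in_AutQ g g2"
  shows False
proof -
  have r1: "is_restriction g1 g" and bump: "is_bump g1"
    using orb by (simp_all add: is_orbital_elem_iff)
  have fin_g: "finite (nontrivial_orbitals g)"
    using fin nontrivial_orbitals_restriction[OF g f r] by (auto intro: finite_subset)
  have "nontrivial_orbitals g1 \<noteq> {}" "nontrivial_orbitals g1 \<subseteq> nontrivial_orbitals g"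
    using bump nontrivial_orbitals_restriction[OF g1 g r1] by (auto simp: is_bump_def)
  then have "card (nontrivial_orbitals g2) < card (nontrivial_orbitals g)"
    using nontrivial_orbitals_cofactor[OF g g1 g2 r1 g_eq] fin_g
    by (intro psubset_card_mono) auto
  then show False
    using card_nontrivial_orbitals_conj[OF g c] by simp
qed

definition restr :: "(rat \<Rightarrow> rat) \<Rightarrow> rat set \<Rightarrow> rat \<Rightarrow> rat" where
  "restr f S x = (if x \<in> S then f x else x)"

lemma restr_UNIV: "restr f UNIV = f"
  by (simp add: restr_def fun_eq_iff)

lemma supp_restr: "supp (restr f S) = S \<inter> supp f"
  by (auto simp: supp_def restr_def)

lemma is_restriction_restr: "S \<subseteq> T \<Longrightarrow> is_restriction (restr f S) (restr f T)"
  by (auto simp: is_restriction_def supp_def restr_def)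

lemma restr_AutQ:
  assumes f: "f \<in> AutQ" and S: "orbital_saturated f S"
  shows "restr f S \<in> AutQ"
proof (rule AutQI)
  have in_S: "orbital_at f x \<subseteq> S" if "x \<in> S" for x
    using S that by (simp add: orbital_saturated_def)
  show "strict_mono (restr f S)"
  proof (rule strict_monoI)
    fix x y :: rat assume "x < y"
    consider "x \<in> S" "y \<in> S" | "x \<in> S" "y \<notin> S" | "x \<notin> S" "y \<in> S" | "x \<notin> S" "y \<notin> S"
      by blast
    then show "restr f S x < restr f S y"
    proof cases
      case 1
      with \<open>x < y\<close> show ?thesis by (simp add: restr_def AutQ_less_iff f)
    next
      case 2
      then have "f x < y"
        using in_S[of x] apply_less_if_notin_orbital_at[OF f \<open>x < y\<close>] by blast
      with 2 show ?thesis by (simp add: restr_def)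
    next
      case 3
      then have "x < f y"
        using in_S[of y] less_apply_if_notin_orbital_at[OF f \<open>x < y\<close>] by blast
      with 3 show ?thesis by (simp add: restr_def)
    next
      case 4
      with \<open>x < y\<close> show ?thesis by (simp add: restr_def)
    qed
  qed
  show "surj (restr f S)"
  proof (rule surjI)
    fix y
    show "restr f S (if y \<in> S then inv f y else y) = y"
      using in_S[of y] inv_apply_mem_orbital_at[OF f, of y] AutQ_bij[OF f]
      by (auto simp: restr_def bij_is_surj surj_f_inv_f)
  qed
qed

lemma restr_Un:
  assumes f: "f \<in> AutQ" and disj: "A \<inter> B = {}" and B: "orbital_saturated f B"
  shows "restr f (A \<union> B) = restr f A \<circ> restr f B"
proof
  fix x
  have "f x \<in> B" if "x \<in> B"
    using B that apply_mem_orbital_at[OF f] by (auto simp: orbital_saturated_def)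
  then show "restr f (A \<union> B) x = (restr f A \<circ> restr f B) x"
    using disj by (auto simp: restr_def)
qed

lemma is_bump_restr_orbital_at:
  assumes f: "f \<in> AutQ" and a: "f a \<noteq> a"
  shows "is_bump (restr f (orbital_at f a))"
proof -
  let ?U = "orbital_at f a"
  have sat: "orbital_saturated f ?U"
    using orbital_saturated_orbital_at[OF f] .
  have U_supp: "?U \<subseteq> supp f"
    using orbital_at_subset_supp[OF f] a by (simp add: supp_def)
  have g1: "restr f ?U \<in> AutQ"
    using restr_AutQ[OF f sat] .
  have r: "is_restriction (restr f ?U) f"
    using is_restriction_restr[of ?U UNIV f] by (simp add: restr_UNIV)
  have "nontrivial_orbitals (restr f ?U) = {V \<in> nontrivial_orbitals f. V \<subseteq> ?U}"
    using nontrivial_orbitals_restriction[OF g1 f r] U_supp by (simp add: supp_restr Int_absorb2)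
  also have "\<dots> = {?U}"
  proof -
    have "V = ?U" if "V \<in> nontrivial_orbitals f" "V \<subseteq> ?U" for V
    proof -
      have "V \<in> orbital_at f ` supp f"
        using that(1) nontrivial_orbitals_eq[OF f] by simp
      then obtain x where "V = orbital_at f x" by auto
      with that(2) show ?thesis
        using orbital_at_eq[OF f] orbital_at_refl by blast
    qed
    moreover have "?U \<in> nontrivial_orbitals f"
      using a nontrivial_orbitals_eq[OF f] by (simp add: supp_def)
    ultimately show ?thesis by blast
  qed
  finally have "nontrivial_orbitals (restr f ?U) = {?U}" .
  moreover have "restr f ?U \<noteq> id"
    using a orbital_at_refl[of a f] by (auto simp: restr_def fun_eq_iff)
  ultimately show ?thesis
    using g1 by (simp add: is_bump_def)
qed

lemma conjugate_cofactor_of_orbital_sequence: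
  assumes f: "f \<in> AutQ" and moved: "\<And>i. f (a i) \<noteq> a i"
    and inj: "inj (\<lambda>i. orbital_at f (a i))"
    and conj: "conj_in_AutQ (restr f (\<Union>i. orbital_at f (a i)))
                            (restr f (\<Union>i. orbital_at f (a (Suc i))))"
  shows "\<exists>g\<in>AutQ. \<exists>g1\<in>AutQ. \<exists>g2\<in>AutQ. is_restriction g f \<and> is_bump g1 \<and>
           is_orbital_elem g1 g \<and> g = g1 \<circ> g2 \<and> conj_in_AutQ g g2"
proof -
  let ?U = "\<lambda>i. orbital_at f (a i)"
  let ?S = "\<Union>i. ?U i" and ?S2 = "\<Union>i. ?U (Suc i)"
  have sat: "orbital_saturated f (\<Union>i. orbital_at f (b i))" for b
    using orbital_saturated_orbital_at[OF f] by (auto simp: orbital_saturated_def)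
  have split: "?S = ?U 0 \<union> ?S2"
    by (auto simp: UN_Un_distrib[symmetric]) (metis not0_implies_Suc)
  have "?U 0 \<inter> ?U (Suc i) = {}" for i
    using orbital_at_disjoint[OF f] injD[OF inj, of 0 "Suc i"] by blast
  then have disj: "?U 0 \<inter> ?S2 = {}" by blast
  have "restr f ?S \<in> AutQ" "restr f (?U 0) \<in> AutQ" "restr f ?S2 \<in> AutQ"
    using restr_AutQ[OF f sat[of a]] restr_AutQ[OF f sat[of "\<lambda>i. a (Suc i)"]]
      restr_AutQ[OF f orbital_saturated_orbital_at[OF f]] by auto
  moreover have "is_restriction (restr f ?S) f"
    using is_restriction_restr[of ?S UNIV f] by (simp add: restr_UNIV)
  moreover have "is_bump (restr f (?U 0))"
    using is_bump_restr_orbital_at[OF f moved] .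
  moreover have "is_orbital_elem (restr f (?U 0)) (restr f ?S)"
    using \<open>is_bump (restr f (?U 0))\<close> is_restriction_restr[of "?U 0" ?S f]
    by (auto simp: is_orbital_elem_iff)
  moreover have "restr f ?S = restr f (?U 0) \<circ> restr f ?S2"
    using restr_Un[OF f disj sat[of "\<lambda>i. a (Suc i)"]] split by simp
  ultimately show ?thesis
    using conj by blast
qed

section \<open>Order isomorphisms between convex sets of rationals\<close>

definition ord_iso_betw :: "('a::linorder \<Rightarrow> 'b::linorder) \<Rightarrow> 'a set \<Rightarrow> 'b set \<Rightarrow> bool" where
  "ord_iso_betw h A B \<longleftrightarrow> bij_betw h A B \<and> strict_mono_on A h"

definition has_min :: "'a::order set \<Rightarrow> bool" where
  "has_min S \<longleftrightarrow> (\<exists>m\<in>S. \<forall>x\<in>S. m \<le> x)"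

definition has_max :: "'a::order set \<Rightarrow> bool" where
  "has_max S \<longleftrightarrow> (\<exists>m\<in>S. \<forall>x\<in>S. x \<le> m)"

lemma has_max_uminus: "has_max (uminus ` S) \<longleftrightarrow> has_min (S :: 'a::ordered_ab_group_add set)"
  unfolding has_max_def has_min_def by auto

lemma has_min_uminus: "has_min (uminus ` S) \<longleftrightarrow> has_max (S :: 'a::ordered_ab_group_add set)"
  unfolding has_max_def has_min_def by auto

lemma ord_iso_betw_strict_mono: "strict_mono h \<Longrightarrow> ord_iso_betw h A (h ` A)"
  by (simp add: ord_iso_betw_def bij_betw_def strict_mono_imp_inj_on strict_mono_on_def
      strict_mono_def)

lemma ord_iso_betw_comp:
  "ord_iso_betw g A B \<Longrightarrow> ord_iso_betw h B C \<Longrightarrow> ord_iso_betw (h \<circ> g) A C"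
  unfolding ord_iso_betw_def strict_mono_on_def
  by (auto simp: bij_betw_def comp_inj_on)

lemma image_atLeastLessThan_strict_mono:
  fixes h :: "'a::linorder \<Rightarrow> 'b::linorder"
  assumes "strict_mono h" "surj h"
  shows "h ` {a..<b} = {h a..<h b}"
proof
  show "h ` {a..<b} \<subseteq> {h a..<h b}"
    using assms(1) by (auto simp: strict_mono_less strict_mono_less_eq)
  show "{h a..<h b} \<subseteq> h ` {a..<b}"
  proof
    fix y assume "y \<in> {h a..<h b}"
    moreover obtain x where "y = h x" using assms(2) by auto
    ultimately show "y \<in> h ` {a..<b}"
      using assms(1) by (auto simp: strict_mono_less strict_mono_less_eq)
  qed
qed

lemma ord_iso_betw_atLeastLessThan:
  fixes a b c d :: "'a::linordered_field"
  assumes "a < b" "c < d"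
  shows "\<exists>h. ord_iso_betw h {a..<b} {c..<d}"
proof -
  define k where "k = (d - c) / (b - a)"
  have k: "0 < k" using assms by (simp add: k_def)
  define h where "h x = c + (x - a) * k" for x
  have "strict_mono h"
    using k by (auto simp: strict_mono_def h_def)
  moreover have "surj h"
  proof (rule surjI)
    fix y show "h (a + (y - c) / k) = y" using k by (simp add: h_def)
  qed
  moreover have "h a = c" "h b = d"
    using assms by (simp_all add: h_def k_def)
  ultimately have "h ` {a..<b} = {c..<d}"
    using image_atLeastLessThan_strict_mono by metis
  then show ?thesis
    using ord_iso_betw_strict_mono[OF \<open>strict_mono h\<close>, of "{a..<b}"] by auto
qed

lemma ord_iso_betw_piecewise:
  fixes P :: "'i::linorder \<Rightarrow> 'a::linorder set" and Q :: "'i \<Rightarrow> 'b::linorder set"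
  assumes P: "\<And>i j. i < j \<Longrightarrow> set_less (P i) (P j)"
    and Q: "\<And>i j. i < j \<Longrightarrow> set_less (Q i) (Q j)"
    and h: "\<And>i. ord_iso_betw (h i) (P i) (Q i)"
  shows "\<exists>H. ord_iso_betw H (\<Union>i. P i) (\<Union>i. Q i) \<and> (\<forall>i. \<forall>x\<in>P i. H x = h i x)"
proof -
  have unique: "i = j" if "x \<in> P i" "x \<in> P j" for x i j
    using that P[of i j] P[of j i] by (cases i j rule: linorder_cases) (auto simp: set_less_def)
  define H where "H x = h (SOME i. x \<in> P i) x" for x
  have H: "H x = h i x" if "x \<in> P i" for x i
    using that unique someI[of "\<lambda>i. x \<in> P i"] by (metis H_def)
  have HQ: "H x \<in> Q i" if "x \<in> P i" for x i
    using that h[of i] H by (auto simp: ord_iso_betw_def bij_betw_def)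
  have mono: "strict_mono_on (\<Union>i. P i) H"
  proof (rule strict_mono_onI)
    fix x y assume "x \<in> (\<Union>i. P i)" "y \<in> (\<Union>i. P i)" "x < y"
    then obtain i j where ij: "x \<in> P i" "y \<in> P j" by blast
    show "H x < H y"
    proof (cases i j rule: linorder_cases)
      case less
      then show ?thesis using Q HQ ij by (auto simp: set_less_def)
    next
      case equal
      then show ?thesis
        using h[of i] ij \<open>x < y\<close> H by (auto simp: ord_iso_betw_def dest: strict_mono_onD)
    next
      case greater
      then show ?thesis using P ij \<open>x < y\<close> by (force simp: set_less_def)
    qed
  qed
  have "H ` (\<Union>i. P i) = (\<Union>i. Q i)"
  proof (intro equalityI subsetI)
    fix y assume "y \<in> (\<Union>i. Q i)"
    then obtain i where "y \<in> Q i" by blast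
    then obtain x where "x \<in> P i" "y = h i x"
      using h[of i] by (auto simp: ord_iso_betw_def bij_betw_def)
    then show "y \<in> H ` (\<Union>i. P i)"
      by (intro image_eqI[of y H x]) (auto simp: H)
  qed (use HQ in auto)
  then show ?thesis
    using mono H
    by (intro exI[of _ H]) (auto simp: ord_iso_betw_def bij_betw_def strict_mono_on_imp_inj_on)
qed

lemma strict_mono_int_SucI:
  fixes u :: "int \<Rightarrow> 'a::order"
  assumes "\<And>k. u k < u (k + 1)"
  shows "strict_mono u"
proof (rule strict_monoI)
  fix i j :: int assume "i < j"
  then show "u i < u j"
    by (induction j rule: int_gr_induct) (use assms less_trans in blast)+
qed

lemma set_less_intervals:
  fixes u :: "int \<Rightarrow> 'a::linorder"
  assumes "strict_mono u" "i < j"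
  shows "set_less {u i..<u (i + 1)} {u j..<u (j + 1)}"
proof -
  have "u (i + 1) \<le> u j" using assms by (simp add: strict_mono_less_eq)
  then show ?thesis by (auto simp: set_less_def)
qed

lemma strict_mono_int_bracket:
  fixes u :: "int \<Rightarrow> 'a::linorder"
  assumes u: "strict_mono u" and "u i \<le> x" "x < u j"
  shows "\<exists>k\<ge>i. u k \<le> x \<and> x < u (k + 1)"
proof -
  let ?K = "{k. i \<le> k \<and> u k \<le> x}"
  have "?K \<subseteq> {i..<j}"
    using u \<open>x < u j\<close> by (auto simp: strict_mono_less[OF u, symmetric])
  then have "finite ?K" by (rule finite_subset) simp
  moreover have "i \<in> ?K" using assms by simp
  ultimately have "Max ?K \<in> ?K" "Max ?K + 1 \<notin> ?K"
    using Max_in[of ?K] Max_ge[of ?K "Max ?K + 1"] by auto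
  then show ?thesis by (intro exI[of _ "Max ?K"]) auto
qed

lemma cofinal_sequence:
  fixes C :: "'a::{linorder, countable} set"
  assumes c: "c \<in> C" and no_max: "\<not> has_max C"
  shows "\<exists>s :: nat \<Rightarrow> 'a. strict_mono s \<and> s 0 = c \<and> range s \<subseteq> C \<and> (\<forall>x\<in>C. \<exists>n. x < s n)"
proof -
  have bigger: "\<exists>y\<in>C. x < y" if "x \<in> C" for x
    using no_max that by (auto simp: has_max_def not_le)
  txt \<open>Step \<open>n\<close> also overtakes the \<open>n\<close>-th element of an enumeration, which makes the
    sequence cofinal.\<close>
  define next_in where
    "next_in n z = (SOME y. y \<in> C \<and> z < y \<and> (from_nat n \<in> C \<longrightarrow> from_nat n < y))" for n z
  define s where "s = rec_nat c next_in"
  have next_in: "next_in n z \<in> C \<and> z < next_in n z \<and> (from_nat n \<in> C \<longrightarrow> from_nat n < next_in n z)"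
    if "z \<in> C" for n z
  proof -
    have "\<exists>y. y \<in> C \<and> z < y \<and> (from_nat n \<in> C \<longrightarrow> from_nat n < y)"
    proof (cases "from_nat n \<in> C")
      case True
      then have "max z (from_nat n) \<in> C" using that by (simp add: max_def)
      then show ?thesis using bigger by fastforce
    next
      case False
      then show ?thesis using bigger[OF that] by blast
    qed
    then show ?thesis unfolding next_in_def by (rule someI_ex)
  qed
  have s_C: "s n \<in> C" for n
    by (induction n) (simp_all add: s_def c next_in)
  have s_step: "s n < s (Suc n)" and s_from_nat: "from_nat n \<in> C \<Longrightarrow> from_nat n < s (Suc n)" for n
    using next_in[OF s_C[of n]] by (simp_all add: s_def)
  have "\<exists>n. x < s n" if "x \<in> C" for x
    using s_from_nat[of "to_nat x"] that by auto
  moreover have "s 0 = c" by (simp add: s_def)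
  ultimately show ?thesis
    using s_C s_step by (intro exI[of _ s]) (auto simp: strict_mono_Suc_iff)
qed

lemma coinitial_sequence:
  fixes C :: "'a::{linordered_ab_group_add, countable} set"
  assumes c: "c \<in> C" and no_min: "\<not> has_min C"
  shows "\<exists>t :: nat \<Rightarrow> 'a. strict_mono t \<and> t 0 = - c \<and> range t \<subseteq> uminus ` C \<and>
           (\<forall>x\<in>C. \<exists>n. - x < t n)"
proof -
  have "- c \<in> uminus ` C" "\<not> has_max (uminus ` C)"
    using c no_min by (simp_all add: has_max_uminus)
  then obtain t :: "nat \<Rightarrow> 'a" where "strict_mono t \<and> t 0 = - c \<and>
      range t \<subseteq> uminus ` C \<and> (\<forall>y\<in>uminus ` C. \<exists>n. y < t n)"
    using cofinal_sequence[of "- c" "uminus ` C"] by blast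
  then show ?thesis by auto
qed

lemma strict_mono_int_join:
  fixes s t :: "nat \<Rightarrow> 'a::ordered_ab_group_add"
  assumes s: "strict_mono s" and t: "strict_mono t" and "s 0 = - t 0"
  shows "strict_mono (\<lambda>k::int. if 0 \<le> k then s (nat k) else - t (nat (- k)))"
proof (rule strict_mono_int_SucI)
  fix k :: int
  consider "0 \<le> k" | "k = -1" | "k < -1" by linarith
  then show "(if 0 \<le> k then s (nat k) else - t (nat (- k)))
      < (if 0 \<le> k + 1 then s (nat (k + 1)) else - t (nat (- (k + 1))))"
  proof cases
    case 1
    then show ?thesis using s by (simp add: nat_add_distrib strict_mono_Suc_iff)
  next
    case 2
    then show ?thesis using assms(3) strict_monoD[OF t, of 0 1] by simp
  next
    case 3
    then have "nat (- k) = Suc (nat (- (k + 1)))" by simp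
    with 3 show ?thesis using t by (simp add: strict_mono_Suc_iff)
  qed
qed

lemma ord_convex_eq_UN_intervals:
  fixes u :: "int \<Rightarrow> 'a::linorder"
  assumes convex: "ord_convex C" and u: "strict_mono u"
    and K: "\<And>i k. i \<in> K \<Longrightarrow> i \<le> k \<Longrightarrow> k \<in> K" and in_C: "\<And>k. k \<in> K \<Longrightarrow> u k \<in> C"
    and cover: "\<And>x. x \<in> C \<Longrightarrow> \<exists>i\<in>K. \<exists>j. u i \<le> x \<and> x < u j"
  shows "C = (\<Union>k\<in>K. {u k..<u (k + 1)})"
proof (intro equalityI subsetI)
  fix x assume "x \<in> C"
  then obtain i j where "i \<in> K" "u i \<le> x" "x < u j" using cover by blast
  moreover from this obtain k where "i \<le> k" "u k \<le> x" "x < u (k + 1)"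
    using strict_mono_int_bracket[OF u] by blast
  ultimately show "x \<in> (\<Union>k\<in>K. {u k..<u (k + 1)})" using K by auto
next
  fix x assume "x \<in> (\<Union>k\<in>K. {u k..<u (k + 1)})"
  then obtain k where k: "k \<in> K" "u k \<le> x" "x < u (k + 1)" by auto
  then have "u k \<in> C" "u (k + 1) \<in> C" using K in_C by auto
  with k show "x \<in> C" using ord_convexD[OF convex] by (meson less_imp_le)
qed

lemma ord_convex_no_max_decomp:
  fixes C :: "rat set"
  assumes convex: "ord_convex C" and "C \<noteq> {}" and no_max: "\<not> has_max C"
  shows "\<exists>u :: int \<Rightarrow> rat. strict_mono u \<and>
           C = (\<Union>k \<in> (if has_min C then {0..} else UNIV). {u k..<u (k + 1)})"
proof -
  obtain c where c: "c \<in> C" and c_min: "has_min C \<Longrightarrow> \<forall>x\<in>C. c \<le> x"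
    using \<open>C \<noteq> {}\<close> by (cases "has_min C") (auto simp: has_min_def)
  obtain s :: "nat \<Rightarrow> rat"
    where "strict_mono s \<and> s 0 = c \<and> range s \<subseteq> C \<and> (\<forall>x\<in>C. \<exists>n. x < s n)"
    using cofinal_sequence[OF c no_max] ..
  then have s: "strict_mono s" "s 0 = c" "range s \<subseteq> C" "\<forall>x\<in>C. \<exists>n. x < s n"
    by simp_all
  txt \<open>Below \<open>c\<close>: a sequence descending through \<open>C\<close>, or filler if \<open>c\<close> is the minimum.\<close>
  obtain t :: "nat \<Rightarrow> rat" where t: "strict_mono t" "t 0 = - c"
    and t_C: "\<not> has_min C \<Longrightarrow> range t \<subseteq> uminus ` C \<and> (\<forall>x\<in>C. \<exists>n. - x < t n)"
  proof (cases "has_min C")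
    case True
    show thesis
      by (rule that[of "\<lambda>n. of_nat n - c"]) (auto simp: strict_mono_def True)
  next
    case False
    then show thesis using coinitial_sequence[OF c False] that by blast
  qed
  define u where "u k = (if 0 \<le> k then s (nat k) else - t (nat (- k)))" for k
  have u: "strict_mono u"
    using strict_mono_int_join[OF s(1) t(1)] s(2) t(2) by (simp add: u_def[abs_def])
  define K where "K = (if has_min C then {0..} else (UNIV :: int set))"
  have "C = (\<Union>k\<in>K. {u k..<u (k + 1)})"
  proof (rule ord_convex_eq_UN_intervals[OF convex u])
    show "k \<in> K" if "i \<in> K" "i \<le> k" for i k
      using that by (auto simp: K_def split: if_splits)
    show "u k \<in> C" if "k \<in> K" for k
    proof (cases "0 \<le> k")
      case True
      then show ?thesis using s(3) by (auto simp: u_def)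
    next
      case False
      then have "t (nat (- k)) \<in> uminus ` C" using that t_C by (auto simp: K_def split: if_splits)
      with False show ?thesis by (auto simp: u_def)
    qed
    show "\<exists>i\<in>K. \<exists>j. u i \<le> x \<and> x < u j" if x: "x \<in> C" for x
    proof -
      obtain n where "x < u (int n)" using s(4) x by (auto simp: u_def)
      moreover obtain i where "i \<in> K" "u i \<le> x"
      proof (cases "has_min C")
        case True
        then show thesis using that[of 0] c_min x s(2) by (simp add: u_def K_def)
      next
        case False
        then obtain m where "- x < t m" using t_C x by blast
        then show thesis
          using that[of "- int m"] False s(2) t(2) by (cases "m = 0") (auto simp: u_def K_def)
      qed
      ultimately show ?thesis by blast
    qed
  qed
  with u show ?thesis by (auto simp: K_def)
qed

lemma ord_iso_betw_interval_unions:
  fixes u v :: "int \<Rightarrow> 'a::linordered_field"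
  assumes u: "strict_mono u" and v: "strict_mono v"
  shows "\<exists>H. ord_iso_betw H (\<Union>k\<in>K. {u k..<u (k + 1)}) (\<Union>k\<in>K. {v k..<v (k + 1)})"
proof -
  define P where "P k = (if k \<in> K then {u k..<u (k + 1)} else {})" for k
  define Q where "Q k = (if k \<in> K then {v k..<v (k + 1)} else {})" for k
  have ex: "\<exists>h. ord_iso_betw h (P k) (Q k)" for k
    using ord_iso_betw_atLeastLessThan[of "u k" "u (k + 1)" "v k" "v (k + 1)"] u v
    by (cases "k \<in> K") (auto simp: P_def Q_def strict_mono_def ord_iso_betw_def)
  define h where "h k = (SOME h. ord_iso_betw h (P k) (Q k))" for k
  have h: "ord_iso_betw (h k) (P k) (Q k)" for k
    unfolding h_def using someI_ex[OF ex] .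
  have "set_less (P i) (P j)" "set_less (Q i) (Q j)" if "i < j" for i j
  proof -
    have "u (i + 1) \<le> u j" "v (i + 1) \<le> v j"
      using that u v by (simp_all add: strict_mono_less_eq)
    then show "set_less (P i) (P j)" "set_less (Q i) (Q j)"
      by (auto simp: set_less_def P_def Q_def)
  qed
  moreover have "(\<Union>k. P k) = (\<Union>k\<in>K. {u k..<u (k + 1)})" "(\<Union>k. Q k) = (\<Union>k\<in>K. {v k..<v (k + 1)})"
    by (auto simp: P_def Q_def split: if_splits)
  ultimately show ?thesis
    using ord_iso_betw_piecewise[of P Q h] h by auto
qed

lemma ord_iso_betw_no_max:
  fixes C D :: "rat set"
  assumes "ord_convex C" "C \<noteq> {}" "\<not> has_max C"
    and "ord_convex D" "D \<noteq> {}" "\<not> has_max D"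
    and "has_min C \<longleftrightarrow> has_min D"
  shows "\<exists>H. ord_iso_betw H C D"
proof -
  obtain u :: "int \<Rightarrow> rat" where u: "strict_mono u"
    "C = (\<Union>k \<in> (if has_min C then {0..} else UNIV). {u k..<u (k + 1)})"
    using ord_convex_no_max_decomp[OF assms(1-3)] by blast
  obtain v :: "int \<Rightarrow> rat" where v: "strict_mono v"
    "D = (\<Union>k \<in> (if has_min D then {0..} else UNIV). {v k..<v (k + 1)})"
    using ord_convex_no_max_decomp[OF assms(4-6)] by blast
  define K where "K = (if has_min C then {0..} else (UNIV :: int set))"
  have "C = (\<Union>k\<in>K. {u k..<u (k + 1)})" "D = (\<Union>k\<in>K. {v k..<v (k + 1)})"
    using u(2) v(2) assms(7) by (simp_all add: K_def)
  then show ?thesis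
    using ord_iso_betw_interval_unions[OF u(1) v(1), of K] by simp
qed

lemma ord_convex_Diff_max:
  fixes C :: "'a::{linorder, dense_order} set"
  assumes convex: "ord_convex C" and M: "M \<in> C" "\<forall>x\<in>C. x \<le> M" and x: "x \<in> C" "x < M"
  shows "ord_convex (C - {M})" "C - {M} \<noteq> {}" "\<not> has_max (C - {M})"
    "has_min (C - {M}) \<longleftrightarrow> has_min C" "set_less (C - {M}) {M}"
proof -
  show "ord_convex (C - {M})"
    unfolding ord_convex_def
  proof (intro ballI allI impI)
    fix a z y assume a: "a \<in> C - {M}" and z: "z \<in> C - {M}" and y: "a \<le> y \<and> y \<le> z"
    have "y \<in> C"
      using ord_convexD[OF convex, of a z y] a z y by simp
    moreover have "z < M"
      using M(2) z by force
    ultimately show "y \<in> C - {M}"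
      using y by auto
  qed
  show "C - {M} \<noteq> {}" using x by auto
  show "\<not> has_max (C - {M})"
  proof
    assume "has_max (C - {M})"
    then obtain m where m: "m \<in> C - {M}" "\<forall>y\<in>C - {M}. y \<le> m" by (auto simp: has_max_def)
    then have "m < M" using M by force
    then obtain y where "m < y" "y < M" using dense by blast
    then show False
      using m ord_convexD[OF convex, of m M y] M by force
  qed
  show "has_min (C - {M}) \<longleftrightarrow> has_min C"
  proof
    assume "has_min (C - {M})"
    then obtain m where "m \<in> C - {M}" "\<forall>y\<in>C - {M}. m \<le> y" by (auto simp: has_min_def)
    with M show "has_min C" unfolding has_min_def by (metis DiffD1 insert_Diff insert_iff)
  next
    assume "has_min C"
    then obtain m where "m \<in> C" "\<forall>y\<in>C. m \<le> y" by (auto simp: has_min_def)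
    with x show "has_min (C - {M})" unfolding has_min_def by force
  qed
  show "set_less (C - {M}) {M}"
    using M by (force simp: set_less_def)
qed

theorem ord_iso_betw_ord_convex:
  fixes C D :: "rat set"
  assumes C: "ord_convex C" "\<exists>x\<in>C. \<exists>y\<in>C. x < y"
    and D: "ord_convex D" "\<exists>x\<in>D. \<exists>y\<in>D. x < y"
    and min: "has_min C \<longleftrightarrow> has_min D" and max: "has_max C \<longleftrightarrow> has_max D"
  shows "\<exists>H. ord_iso_betw H C D"
proof (cases "has_max C")
  case False
  then show ?thesis
    using ord_iso_betw_no_max[of C D] assms by blast
next
  case True
  then obtain M M' where M: "M \<in> C" "\<forall>x\<in>C. x \<le> M" and M': "M' \<in> D" "\<forall>x\<in>D. x \<le> M'"
    using max by (auto simp: has_max_def)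
  obtain x x' where "x \<in> C" "x < M" "x' \<in> D" "x' < M'"
    using C(2) D(2) M M' by (meson less_le_trans)
  note C' = ord_convex_Diff_max[OF C(1) M this(1,2)]
    and D' = ord_convex_Diff_max[OF D(1) M' this(3,4)]
  obtain H0 where H0: "ord_iso_betw H0 (C - {M}) (D - {M'})"
    using ord_iso_betw_no_max[of "C - {M}" "D - {M'}"] C' D' min by blast
  define P where "P b = (if b then {M} else C - {M})" for b
  define Q where "Q b = (if b then {M'} else D - {M'})" for b
  define h where "h b = (if b then (\<lambda>_. M') else H0)" for b
  have "ord_iso_betw (h b) (P b) (Q b)" for b
    using H0 by (cases b) (auto simp: P_def Q_def h_def ord_iso_betw_def bij_betw_def
        strict_mono_on_def)
  moreover have "set_less (P i) (P j)" "set_less (Q i) (Q j)" if "i < j" for i j :: bool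
    using that C'(5) D'(5) by (auto simp: P_def Q_def)
  moreover have "(\<Union>b. P b) = C" "(\<Union>b. Q b) = D"
    using M M' by (auto simp: P_def Q_def UNIV_bool)
  ultimately show ?thesis
    using ord_iso_betw_piecewise[of P Q h] by auto
qed

section \<open>Conjugating orbitals\<close>

definition conj_iso_on ::
  "('a::linorder \<Rightarrow> 'b::linorder) \<Rightarrow> ('a \<Rightarrow> 'a) \<Rightarrow> ('b \<Rightarrow> 'b) \<Rightarrow> 'a set \<Rightarrow> 'b set \<Rightarrow> bool" where
  "conj_iso_on h f g A B \<longleftrightarrow> ord_iso_betw h A B \<and> f ` A \<subseteq> A \<and> (\<forall>x\<in>A. h (f x) = g (h x))"

lemma ipow_succ_apply: "bij f \<Longrightarrow> ipow f (k + 1) a = ipow f k (f a)"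
  using ipow_add[of f k 1] ipow_1[of f] by simp

lemma strict_mono_ipow_orbit:
  assumes f: "f \<in> AutQ" and a: "a < f a"
  shows "strict_mono (\<lambda>k. ipow f k a)"
  using a AutQ_less_iff[OF ipow_AutQ[OF f]]
  by (intro strict_mono_int_SucI) (simp add: ipow_succ_apply AutQ_bij f)

lemma orbital_at_eq_UN_intervals:
  assumes f: "f \<in> AutQ" and a: "a < f a"
  shows "orbital_at f a = (\<Union>k. {ipow f k a..<ipow f (k + 1) a})"
proof (intro equalityI subsetI)
  fix x assume "x \<in> orbital_at f a"
  then obtain m n where "ipow f m a \<le> x" "x \<le> ipow f n a"
    by (auto simp: orbital_at_def)
  moreover have "ipow f n a < ipow f (n + 1) a"
    using strict_mono_ipow_orbit[OF f a] by (simp add: strict_mono_def)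
  ultimately show "x \<in> (\<Union>k. {ipow f k a..<ipow f (k + 1) a})"
    using strict_mono_int_bracket[OF strict_mono_ipow_orbit[OF f a], of m x "n + 1"] by auto
qed (force simp: orbital_at_def dest: less_imp_le)

lemma ord_iso_betw_ipow:
  "f \<in> AutQ \<Longrightarrow> ord_iso_betw (ipow f k) {x..<y} {ipow f k x..<ipow f k y}"
  using ord_iso_betw_strict_mono[of "ipow f k" "{x..<y}"]
    image_atLeastLessThan_strict_mono[of "ipow f k" x y] ipow_AutQ[of f k]
  by (simp add: AutQ_strict_mono AutQ_bij bij_is_surj)

lemma ord_iso_betw_transport:
  assumes f: "f \<in> AutQ" and g: "g \<in> AutQ" and \<phi>: "ord_iso_betw \<phi> {a..<f a} {b..<g b}"
  shows "ord_iso_betw (ipow g k \<circ> \<phi> \<circ> ipow f (- k))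
           {ipow f k a..<ipow f (k + 1) a} {ipow g k b..<ipow g (k + 1) b}"
proof -
  have "ord_iso_betw (ipow f (- k)) {ipow f k a..<ipow f (k + 1) a} {a..<f a}"
    using ord_iso_betw_ipow[OF f, of "- k" "ipow f k a" "ipow f (k + 1) a"] AutQ_bij[OF f]
    by (simp add: ipow_neg_cancel ipow_succ_apply)
  moreover have "ord_iso_betw (ipow g k) {b..<g b} {ipow g k b..<ipow g (k + 1) b}"
    using ord_iso_betw_ipow[OF g, of k b "g b"] AutQ_bij[OF g] by (simp add: ipow_succ_apply)
  ultimately show ?thesis
    using \<phi> ord_iso_betw_comp by blast
qed

text \<open>Transport an order isomorphism between the fundamental domains \<open>[a, f a)\<close> and
  \<open>[b, g b)\<close> along the powers of \<open>f\<close> and \<open>g\<close>.\<close>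

lemma orbital_conj_iso_up:
  assumes f: "f \<in> AutQ" and g: "g \<in> AutQ" and a: "a < f a" and b: "b < g b"
  shows "\<exists>H. ord_iso_betw H (orbital_at f a) (orbital_at g b) \<and>
             (\<forall>x\<in>orbital_at f a. H (f x) = g (H x))"
proof -
  obtain \<phi> where \<phi>: "ord_iso_betw \<phi> {a..<f a} {b..<g b}"
    using ord_iso_betw_atLeastLessThan[OF a b] by blast
  define P where "P k = {ipow f k a..<ipow f (k + 1) a}" for k
  define Q where "Q k = {ipow g k b..<ipow g (k + 1) b}" for k
  define h where "h k = ipow g k \<circ> \<phi> \<circ> ipow f (- k)" for k
  have h: "ord_iso_betw (h k) (P k) (Q k)" for k
    unfolding h_def P_def Q_def by (rule ord_iso_betw_transport[OF f g \<phi>])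
  have "set_less (P i) (P j)" "set_less (Q i) (Q j)" if "i < j" for i j
    using set_less_intervals[OF strict_mono_ipow_orbit[OF f a] that]
      set_less_intervals[OF strict_mono_ipow_orbit[OF g b] that] by (simp_all add: P_def Q_def)
  then obtain H where H: "ord_iso_betw H (\<Union>k. P k) (\<Union>k. Q k)" "\<And>k x. x \<in> P k \<Longrightarrow> H x = h k x"
    using ord_iso_betw_piecewise[of P Q h] h by blast
  have "H (f x) = g (H x)" if "x \<in> P k" for x k
  proof -
    have succ: "ipow f (m + 1) a = f (ipow f m a)" for m
      by (simp add: ipow_succ AutQ_bij f)
    have "f x \<in> P (k + 1)"
      using that unfolding P_def succ by (simp add: AutQ_less_iff[OF f] AutQ_le_iff[OF f])
    then have "H (f x) = ipow g (k + 1) (\<phi> (ipow f (- k - 1) (f x)))"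
      using H(2) by (simp add: h_def)
    also have "ipow f (- k - 1) (f x) = ipow f (- k) x"
      using ipow_add[of f "- k" "- 1"] ipow_pred[of f 0] AutQ_bij[OF f] by (simp add: bij_is_inj)
    finally show ?thesis
      using H(2)[OF that] by (simp add: h_def ipow_succ AutQ_bij g)
  qed
  then show ?thesis
    using H(1) orbital_at_eq_UN_intervals[OF f a] orbital_at_eq_UN_intervals[OF g b]
    by (auto simp: P_def Q_def)
qed

lemma orbital_at_inv: "f \<in> AutQ \<Longrightarrow> orbital_at (inv f) a = orbital_at f a"
  unfolding orbital_at_def by (auto simp: ipow_inv AutQ_bij) (metis minus_minus)+

theorem orbital_conj_iso:
  assumes f: "f \<in> AutQ" and g: "g \<in> AutQ" and a: "f a \<noteq> a" and b: "g b \<noteq> b"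
    and dir: "a < f a \<longleftrightarrow> b < g b"
  shows "\<exists>H. conj_iso_on H f g (orbital_at f a) (orbital_at g b)"
proof -
  have "\<exists>H. ord_iso_betw H (orbital_at f a) (orbital_at g b) \<and>
             (\<forall>x\<in>orbital_at f a. H (f x) = g (H x))"
  proof (cases "a < f a")
    case True
    with dir show ?thesis using orbital_conj_iso_up[OF f g] by blast
  next
    case False
    have "a < inv f a" "b < inv g b"
      using False dir a b AutQ_less_iff[OF inv_AutQ[OF f], of "f a" a]
        AutQ_less_iff[OF inv_AutQ[OF g], of "g b" b] AutQ_bij[OF f] AutQ_bij[OF g]
      by (simp_all add: bij_is_inj)
    from orbital_conj_iso_up[OF inv_AutQ[OF f] inv_AutQ[OF g] this]
    obtain H where H: "ord_iso_betw H (orbital_at f a) (orbital_at g b)"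
      "\<And>x. x \<in> orbital_at f a \<Longrightarrow> H (inv f x) = inv g (H x)"
      unfolding orbital_at_inv[OF f] orbital_at_inv[OF g] by blast
    have "H (f x) = g (H x)" if "x \<in> orbital_at f a" for x
      using H(2)[OF orbital_at_apply_closed[OF f that]] AutQ_bij[OF f] AutQ_bij[OF g]
      by (metis bij_inv_eq_iff bij_is_inj inv_f_f)
    with H(1) show ?thesis by blast
  qed
  then show ?thesis
    using orbital_at_apply_closed[OF f] by (auto simp: conj_iso_on_def)
qed

section \<open>Shifting a monotone sequence of orbitals\<close>

definition below_set :: "'a::order set \<Rightarrow> 'a set" where
  "below_set A = {x. \<forall>y\<in>A. x < y}"

definition above_set :: "'a::order set \<Rightarrow> 'a set" where
  "above_set A = {x. \<forall>y\<in>A. y < x}"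

lemma above_set_empty [simp]: "above_set {} = UNIV"
  by (simp add: above_set_def)

lemma not_has_min_below_set: "\<not> has_min (below_set (A :: 'a::{linorder, no_bot} set))"
proof
  assume "has_min (below_set A)"
  then obtain m where m: "m \<in> below_set A" "\<forall>x\<in>below_set A. m \<le> x"
    by (auto simp: has_min_def)
  obtain y where "y < m" using lt_ex by blast
  with m(1) have "y \<in> below_set A" by (auto simp: below_set_def)
  with m(2) \<open>y < m\<close> show False by fastforce
qed

lemma ord_convex_trichotomy:
  fixes S :: "'a::linorder set"
  assumes "ord_convex S"
  shows "x \<in> S \<or> x \<in> below_set S \<or> x \<in> above_set S"
proof (rule ccontr)
  assume "\<not> ?thesis"
  then obtain u v where "u \<in> S" "v \<in> S" "u \<le> x" "x \<le> v" "x \<notin> S"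
    by (auto simp: below_set_def above_set_def not_less)
  then show False using ord_convexD[OF assms] by blast
qed

lemma set_less_trans: "set_less A B \<Longrightarrow> B \<noteq> {} \<Longrightarrow> set_less B C \<Longrightarrow> set_less A C"
  unfolding set_less_def by (meson all_not_in_conv order.strict_trans)

lemma set_less_disjoint: "set_less A B \<Longrightarrow> A \<inter> B = {}"
  by (auto simp: set_less_def)

lemma set_less_chain:
  assumes "\<And>n. P n \<noteq> {}" "\<And>n. set_less (P n) (P (Suc n))" "m < n"
  shows "set_less (P m) (P n)"
  using assms(3) by (induction n rule: less_Suc_induct) (use assms set_less_trans in blast)+

lemma ord_convex_above_Int_below: "ord_convex (above_set A \<inter> below_set B)"
  by (force simp: ord_convex_def above_set_def below_set_def)

lemma has_min_above_Int_below:
  fixes A B :: "'a::linorder set"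
  assumes "above_set A \<inter> below_set B \<noteq> {}"
  shows "has_min (above_set A \<inter> below_set B) \<longleftrightarrow> has_min (above_set A)"
proof
  assume "has_min (above_set A \<inter> below_set B)"
  then obtain m where m: "m \<in> above_set A \<inter> below_set B" "\<forall>x\<in>above_set A \<inter> below_set B. m \<le> x"
    by (auto simp: has_min_def)
  have "m \<le> y" if "y \<in> above_set A" for y
  proof (cases "y \<in> below_set B")
    case False
    then obtain z where "z \<in> B" "z \<le> y" by (auto simp: below_set_def not_less)
    with m(1) show ?thesis by (auto simp: below_set_def)
  qed (use m that in blast)
  with m(1) show "has_min (above_set A)" by (auto simp: has_min_def)
next
  assume "has_min (above_set A)"
  then obtain m where m: "m \<in> above_set A" "\<forall>x\<in>above_set A. m \<le> x"
    by (auto simp: has_min_def)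
  obtain x where "x \<in> above_set A \<inter> below_set B" using assms by blast
  with m have "m \<in> below_set B" by (force simp: below_set_def)
  with m show "has_min (above_set A \<inter> below_set B)" by (auto simp: has_min_def)
qed

lemma has_max_above_Int_below:
  fixes A B :: "'a::linorder set"
  assumes "above_set A \<inter> below_set B \<noteq> {}"
  shows "has_max (above_set A \<inter> below_set B) \<longleftrightarrow> has_max (below_set B)"
proof
  assume "has_max (above_set A \<inter> below_set B)"
  then obtain m where m: "m \<in> above_set A \<inter> below_set B" "\<forall>x\<in>above_set A \<inter> below_set B. x \<le> m"
    by (auto simp: has_max_def)
  have "y \<le> m" if "y \<in> below_set B" for y
  proof (cases "y \<in> above_set A")
    case False
    then obtain z where "z \<in> A" "y \<le> z" by (auto simp: above_set_def not_less)
    with m(1) show ?thesis by (auto simp: above_set_def)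
  qed (use m that in blast)
  with m(1) show "has_max (below_set B)" by (auto simp: has_max_def)
next
  assume "has_max (below_set B)"
  then obtain m where m: "m \<in> below_set B" "\<forall>x\<in>below_set B. x \<le> m"
    by (auto simp: has_max_def)
  obtain x where "x \<in> above_set A \<inter> below_set B" using assms by blast
  with m have "m \<in> above_set A" by (force simp: above_set_def)
  with m show "has_max (above_set A \<inter> below_set B)" by (auto simp: has_max_def)
qed

text \<open>A sequence \<open>U\<close> of increasing convex sets cuts the line into the blocks
  \<open>gap U 0 < U 0 < gap U 1 < U 1 < \<dots>\<close>, followed by everything above all \<open>U i\<close>.\<close>

definition gap :: "(nat \<Rightarrow> 'a::order set) \<Rightarrow> nat \<Rightarrow> 'a set" where
  "gap U i = above_set (case i of 0 \<Rightarrow> {} | Suc j \<Rightarrow> U j) \<inter> below_set (U i)"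

definition blocks :: "(nat \<Rightarrow> 'a::order set) \<Rightarrow> enat \<Rightarrow> 'a set" where
  "blocks U k = (case k of enat n \<Rightarrow> if even n then gap U (n div 2) else U (n div 2)
                           | \<infinity> \<Rightarrow> above_set (\<Union>i. U i))"

lemma blocks_even [simp]: "blocks U (enat (2 * i)) = gap U i"
  and blocks_odd [simp]: "blocks U (enat (Suc (2 * i))) = U i"
  and blocks_infinity [simp]: "blocks U \<infinity> = above_set (\<Union>i. U i)"
  by (simp_all add: blocks_def)

lemma enat_blocks_cases:
  obtains (gap) i where "k = enat (2 * i)" | (set) i where "k = enat (Suc (2 * i))"
    | (top) "k = \<infinity>"
proof (cases k)
  case (enat n)
  show thesis
  proof (cases "even n")
    case True
    then obtain i where "n = 2 * i" by (rule evenE)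
    with enat show thesis using that(1)[of i] by simp
  next
    case False
    then obtain i where "n = Suc (2 * i)" by (auto elim: oddE)
    with enat show thesis using that(2)[of i] by simp
  qed
qed (rule that(3))

locale block_chain =
  fixes U :: "nat \<Rightarrow> 'a::linorder set"
  assumes convex: "\<And>i. ord_convex (U i)"
    and nonempty: "\<And>i. U i \<noteq> {}"
    and gap_nonempty: "\<And>i. gap U i \<noteq> {}"
    and less: "\<And>i. set_less (U i) (U (Suc i))"
begin

lemma blocks_enat_less: "m < n \<Longrightarrow> set_less (blocks U (enat m)) (blocks U (enat n))"
proof (rule set_less_chain[where P = "\<lambda>n. blocks U (enat n)"])
  show "blocks U (enat n) \<noteq> {}" for n
    using nonempty gap_nonempty by (cases "enat n" rule: enat_blocks_cases) auto
  show "set_less (blocks U (enat n)) (blocks U (enat (Suc n)))" for n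
  proof (cases "enat n" rule: enat_blocks_cases)
    case (gap i)
    then have "n = 2 * i" "Suc n = 2 * i + 1" by simp_all
    then show ?thesis by (auto simp: gap_def below_set_def set_less_def)
  next
    case (set i)
    then have "blocks U (enat n) = U i" "blocks U (enat (Suc n)) = gap U (Suc i)"
      by (simp_all add: blocks_def)
    then show ?thesis by (auto simp: gap_def above_set_def set_less_def)
  qed simp
qed

lemma blocks_enat_subset_below: "\<exists>j. blocks U (enat n) \<subseteq> below_set (U j)"
proof (cases "enat n" rule: enat_blocks_cases)
  case (gap i)
  then show ?thesis by (auto simp: gap_def)
next
  case (set i)
  then show ?thesis using less[of i] by (auto simp: set_less_def below_set_def)
qed simp

lemma blocks_less: "k < l \<Longrightarrow> set_less (blocks U k) (blocks U l)"
proof (cases l)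
  case (enat n)
  assume "k < l"
  with enat obtain m where "k = enat m" "m < n" by (cases k) auto
  with enat show ?thesis using blocks_enat_less by simp
next
  case infinity
  assume "k < l"
  with infinity obtain m where m: "k = enat m" by (cases k) auto
  obtain j where "blocks U (enat m) \<subseteq> below_set (U j)"
    using blocks_enat_subset_below by blast
  moreover obtain z where "z \<in> U j" using nonempty by blast
  ultimately show ?thesis
    using m infinity by (force simp: set_less_def below_set_def above_set_def)
qed

lemma blocks_disjoint: "k \<noteq> l \<Longrightarrow> blocks U k \<inter> blocks U l = {}"
  using blocks_less set_less_disjoint by (metis inf_commute neqE)

lemma Union_blocks: "(\<Union>k. blocks U k) = UNIV"
proof -
  have "\<exists>k. x \<in> blocks U k" for x
  proof (cases "\<forall>i. x \<in> above_set (U i)")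
    case True
    then have "x \<in> blocks U \<infinity>" by (auto simp: above_set_def)
    then show ?thesis ..
  next
    case False
    define i where "i = (LEAST i. x \<notin> above_set (U i))"
    have not_above: "x \<notin> above_set (U i)"
      using False LeastI_ex[of "\<lambda>i. x \<notin> above_set (U i)"] by (auto simp: i_def)
    have prev: "x \<in> above_set (case i of 0 \<Rightarrow> {} | Suc j \<Rightarrow> U j)"
      using not_less_Least[of _ "\<lambda>i. x \<notin> above_set (U i)"]
      by (cases i) (auto simp: i_def above_set_def)
    consider "x \<in> U i" | "x \<in> below_set (U i)"
      using ord_convex_trichotomy[OF convex] not_above by blast
    then show ?thesis
    proof cases
      case 1
      then have "x \<in> blocks U (enat (2 * i + 1))" by simp
      then show ?thesis ..
    next
      case 2
      then have "x \<in> blocks U (enat (2 * i))" using prev by (simp add: gap_def)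
      then show ?thesis ..
    qed
  qed
  then show ?thesis by blast
qed

lemma gap_Int_Union: "gap U i \<inter> (\<Union>j. U j) = {}"
proof -
  have "gap U i \<inter> U j = {}" for j
  proof -
    have "2 * i \<noteq> Suc (2 * j)" by presburger
    then have "enat (2 * i) \<noteq> enat (Suc (2 * j))" by simp
    then show ?thesis using blocks_disjoint by fastforce
  qed
  then show ?thesis by blast
qed

end

lemma conj_in_AutQ_piecewise:
  fixes P Q :: "'i::linorder \<Rightarrow> rat set"
  assumes P: "\<And>i j. i < j \<Longrightarrow> set_less (P i) (P j)" "(\<Union>i. P i) = UNIV"
    and Q: "\<And>i j. i < j \<Longrightarrow> set_less (Q i) (Q j)" "(\<Union>i. Q i) = UNIV"
    and conj: "\<And>i. \<exists>h. conj_iso_on h g2 g (P i) (Q i)"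
  shows "conj_in_AutQ g g2"
proof -
  define h where "h i = (SOME h. conj_iso_on h g2 g (P i) (Q i))" for i
  have h: "conj_iso_on (h i) g2 g (P i) (Q i)" for i
    unfolding h_def using someI_ex[OF conj[of i]] .
  obtain H where H: "ord_iso_betw H UNIV UNIV" "\<And>i x. x \<in> P i \<Longrightarrow> H x = h i x"
    using ord_iso_betw_piecewise[of P Q h] P Q h by (auto simp: conj_iso_on_def)
  then have H_AutQ: "H \<in> AutQ"
    by (simp add: AutQ_def ord_iso_betw_def)
  have H_conj: "H (g2 x) = g (H x)" for x
  proof -
    have "x \<in> (\<Union>i. P i)" using P(2) by simp
    then obtain i where "x \<in> P i" by blast
    then show ?thesis
      using h[of i] H(2)[of x i] H(2)[of "g2 x" i] by (auto simp: conj_iso_on_def)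
  qed
  have "g2 = inv H \<circ> g \<circ> H"
  proof
    fix x
    have "g2 x = inv H (H (g2 x))"
      using AutQ_bij[OF H_AutQ] by (simp add: bij_is_inj)
    then show "g2 x = (inv H \<circ> g \<circ> H) x" by (simp add: H_conj)
  qed
  with H_AutQ show ?thesis by (auto simp: conj_in_AutQ_def)
qed

text \<open>What the shift conjugacy has to match from one chosen orbital to the next.\<close>

definition orbital_type :: "(rat \<Rightarrow> rat) \<Rightarrow> rat \<Rightarrow> bool \<times> bool \<times> bool" where
  "orbital_type f x =
     (x < f x, has_max (below_set (orbital_at f x)), has_min (above_set (orbital_at f x)))"

locale orbital_chain =
  fixes f :: "rat \<Rightarrow> rat" and d :: "nat \<Rightarrow> rat"
  assumes AutQ: "f \<in> AutQ"
    and moved: "\<And>n. f (d n) \<noteq> d n"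
    and inj_orbitals: "inj (\<lambda>n. orbital_at f (d n))"
    and increasing: "strict_mono d"
    and same_type: "\<And>n. orbital_type f (d n) = orbital_type f (d 0)"
begin

abbreviation orb :: "nat \<Rightarrow> rat set" where
  "orb i \<equiv> orbital_at f (d (Suc (2 * i)))"

lemma orbital_at_less: "m < n \<Longrightarrow> set_less (orbital_at f (d m)) (orbital_at f (d n))"
  using orbital_at_set_less[OF AutQ] increasing inj_orbitals
  by (metis injD less_irrefl strict_monoD)

lemma orbital_at_subset_gap: "orbital_at f (d (2 * i)) \<subseteq> gap orb i"
proof (cases i)
  case 0
  then show ?thesis using orbital_at_less[of 0 1] by (auto simp: gap_def set_less_def below_set_def)
next
  case (Suc j)
  then show ?thesis
    using orbital_at_less[of "Suc (2 * j)" "2 * i"] orbital_at_less[of "2 * i" "Suc (2 * i)"]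
    by (auto simp: gap_def set_less_def below_set_def above_set_def)
qed

lemma gap_two_points: "\<exists>x\<in>gap orb i. \<exists>y\<in>gap orb i. x < y"
proof -
  let ?x = "d (2 * i)"
  have "?x \<in> gap orb i" "f ?x \<in> gap orb i"
    using orbital_at_subset_gap orbital_at_refl apply_mem_orbital_at[OF AutQ] by blast+
  then show ?thesis using moved[of "2 * i"] by (metis linorder_neqE)
qed

lemma gap_Suc_subset: "gap orb (Suc i) \<subseteq> gap (\<lambda>i. orb (Suc i)) i"
  by (cases i) (auto simp: gap_def numeral_3_eq_3)

lemma block_chain_orb: "block_chain orb"
  and block_chain_orb_Suc: "block_chain (\<lambda>i. orb (Suc i))"
  using ord_convex_orbital_at orbital_at_refl orbital_at_less gap_two_points
    gap_two_points[of "Suc _"] gap_Suc_subset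
  by (unfold_locales; fastforce)+

lemma above_Union_orb_Suc: "above_set (\<Union>i. orb (Suc i)) = above_set (\<Union>i. orb i)"
proof (intro equalityI subsetI)
  fix x assume x: "x \<in> above_set (\<Union>i. orb (Suc i))"
  have "x \<in> above_set (orb i)" for i
  proof (cases i)
    case 0
    have "\<forall>y\<in>orb (Suc 0). y < x"
      using x unfolding above_set_def by blast
    then have "d 3 < x" "y < d 3" if "y \<in> orb 0" for y
      using that orbital_at_less[of 1 3] orbital_at_refl[of "d 3" f]
      by (auto simp: set_less_def numeral_3_eq_3)
    with 0 show ?thesis by (force simp: above_set_def)
  next
    case (Suc j)
    with x show ?thesis by (auto simp: above_set_def)
  qed
  then show "x \<in> above_set (\<Union>i. orb i)" by (auto simp: above_set_def)
qed (unfold above_set_def, blast)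

lemma type_eq: "orbital_type f (d m) = orbital_type f (d n)"
  using same_type by metis

lemma ord_iso_betw_gap: "\<exists>h. ord_iso_betw h (gap (\<lambda>i. orb (Suc i)) i) (gap orb i)"
proof (rule ord_iso_betw_ord_convex)
  show "ord_convex (gap (\<lambda>i. orb (Suc i)) i)" "ord_convex (gap orb i)"
    by (simp_all add: gap_def ord_convex_above_Int_below)
  show "\<exists>x\<in>gap orb i. \<exists>y\<in>gap orb i. x < y" by (rule gap_two_points)
  then show "\<exists>x\<in>gap (\<lambda>i. orb (Suc i)) i. \<exists>y\<in>gap (\<lambda>i. orb (Suc i)) i. x < y"
    using gap_two_points[of "Suc i"] gap_Suc_subset by blast
  have ne: "gap (\<lambda>i. orb (Suc i)) i \<noteq> {}" "gap orb i \<noteq> {}"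
    using gap_two_points[of "Suc i"] gap_two_points[of i] gap_Suc_subset by blast+
  show "has_min (gap (\<lambda>i. orb (Suc i)) i) \<longleftrightarrow> has_min (gap orb i)"
  proof (cases i)
    case (Suc j)
    then show ?thesis
      using ne type_eq[of "Suc (2 * Suc j)" "Suc (2 * j)"]
      by (simp add: gap_def has_min_above_Int_below orbital_type_def)
  qed (simp add: gap_def not_has_min_below_set)
  show "has_max (gap (\<lambda>i. orb (Suc i)) i) \<longleftrightarrow> has_max (gap orb i)"
    using ne type_eq[of "Suc (2 * Suc i)" "Suc (2 * i)"]
    by (simp add: gap_def has_max_above_Int_below orbital_type_def)
qed

lemma conj_iso_on_gap:
  "\<exists>h. conj_iso_on h (restr f (\<Union>i. orb (Suc i))) (restr f (\<Union>i. orb i))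
         (gap (\<lambda>i. orb (Suc i)) i) (gap orb i)"
proof -
  interpret tgt: block_chain orb by (rule block_chain_orb)
  interpret src: block_chain "\<lambda>i. orb (Suc i)" by (rule block_chain_orb_Suc)
  obtain h where h: "ord_iso_betw h (gap (\<lambda>i. orb (Suc i)) i) (gap orb i)"
    using ord_iso_betw_gap by blast
  have "restr f (\<Union>i. orb (Suc i)) x = x" if "x \<in> gap (\<lambda>i. orb (Suc i)) i" for x
    using that src.gap_Int_Union by (auto simp: restr_def)
  moreover have "restr f (\<Union>i. orb i) y = y" if "y \<in> gap orb i" for y
    using that tgt.gap_Int_Union by (auto simp: restr_def)
  moreover have "h x \<in> gap orb i" if "x \<in> gap (\<lambda>i. orb (Suc i)) i" for x
    using h that by (auto simp: ord_iso_betw_def bij_betw_def)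
  ultimately show ?thesis
    using h by (intro exI[of _ h]) (auto simp: conj_iso_on_def)
qed

lemma conj_iso_on_orb:
  "\<exists>h. conj_iso_on h (restr f (\<Union>i. orb (Suc i))) (restr f (\<Union>i. orb i)) (orb (Suc i)) (orb i)"
proof -
  have "d (Suc (2 * Suc i)) < f (d (Suc (2 * Suc i))) \<longleftrightarrow> d (Suc (2 * i)) < f (d (Suc (2 * i)))"
    using type_eq[of "Suc (2 * Suc i)" "Suc (2 * i)"] by (simp add: orbital_type_def)
  then obtain h where h: "conj_iso_on h f f (orb (Suc i)) (orb i)"
    using orbital_conj_iso[OF AutQ AutQ moved moved] by blast
  have "restr f (\<Union>i. orb (Suc i)) x = f x" if "x \<in> orb (Suc i)" for x
    using that by (auto simp: restr_def)
  moreover have "restr f (\<Union>i. orb i) y = f y" if "y \<in> orb i" for y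
    using that by (auto simp: restr_def)
  moreover have "h x \<in> orb i" if "x \<in> orb (Suc i)" for x
    using h that by (auto simp: conj_iso_on_def ord_iso_betw_def bij_betw_def)
  ultimately show ?thesis
    using h by (intro exI[of _ h]) (auto simp: conj_iso_on_def)
qed

lemma conj_iso_on_top:
  "conj_iso_on id (restr f (\<Union>i. orb (Suc i))) (restr f (\<Union>i. orb i))
     (above_set (\<Union>i. orb (Suc i))) (above_set (\<Union>i. orb i))"
proof -
  have "x \<notin> (\<Union>i. orb i)" "x \<notin> (\<Union>i. orb (Suc i))" if "x \<in> above_set (\<Union>i. orb i)" for x
    using that unfolding above_set_def by blast+
  then show ?thesis
    using above_Union_orb_Suc
    by (auto simp: conj_iso_on_def restr_def ord_iso_betw_def strict_mono_on_def)
qed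

text \<open>The conjugator is glued from order isomorphisms between corresponding blocks: the
  identity above all orbitals, conjugacies between the \<open>i+1\<close>-st and the \<open>i\<close>-th orbital,
  and arbitrary order isomorphisms between the gaps, where both restrictions are trivial.\<close>

theorem conj_restr_shift: "conj_in_AutQ (restr f (\<Union>i. orb i)) (restr f (\<Union>i. orb (Suc i)))"
proof -
  interpret tgt: block_chain orb by (rule block_chain_orb)
  interpret src: block_chain "\<lambda>i. orb (Suc i)" by (rule block_chain_orb_Suc)
  have blocks: "\<exists>h. conj_iso_on h (restr f (\<Union>i. orb (Suc i))) (restr f (\<Union>i. orb i))
          (blocks (\<lambda>i. orb (Suc i)) k) (blocks orb k)" for k
    using conj_iso_on_gap conj_iso_on_orb conj_iso_on_top
    by (cases k rule: enat_blocks_cases) auto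
  show ?thesis
    by (rule conj_in_AutQ_piecewise[OF src.blocks_less src.Union_blocks tgt.blocks_less
          tgt.Union_blocks blocks])
qed

end

section \<open>Reflection in the origin\<close>

definition rflip :: "(rat \<Rightarrow> rat) \<Rightarrow> rat \<Rightarrow> rat" where
  "rflip f x = - f (- x)"

lemma rflip_rflip [simp]: "rflip (rflip f) = f"
  by (simp add: rflip_def fun_eq_iff)

lemma rflip_comp: "rflip (f \<circ> g) = rflip f \<circ> rflip g"
  by (simp add: rflip_def fun_eq_iff)

lemma rflip_AutQ: "f \<in> AutQ \<Longrightarrow> rflip f \<in> AutQ"
proof (rule AutQI)
  assume f: "f \<in> AutQ"
  show "strict_mono (rflip f)"
    by (rule strict_monoI) (simp add: rflip_def AutQ_less_iff[OF f])
  show "surj (rflip f)"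
  proof (rule surjI)
    fix y show "rflip f (- inv f (- y)) = y"
      using AutQ_bij[OF f] by (simp add: rflip_def bij_is_surj surj_f_inv_f)
  qed
qed

lemma inv_rflip: "bij f \<Longrightarrow> inv (rflip f) = rflip (inv f)"
  by (rule inv_unique_comp)
    (simp_all add: fun_eq_iff rflip_def bij_is_surj surj_f_inv_f bij_is_inj)

lemma conj_in_AutQ_rflip:
  assumes "conj_in_AutQ (rflip g) (rflip g2)"
  shows "conj_in_AutQ g g2"
proof -
  obtain h where h: "h \<in> AutQ" and g2: "rflip g2 = inv h \<circ> rflip g \<circ> h"
    using assms by (auto simp: conj_in_AutQ_def)
  have "g2 = rflip (rflip g2)" by simp
  also have "\<dots> = rflip (inv h \<circ> rflip g \<circ> h)"
    using g2 by simp
  also have "\<dots> = inv (rflip h) \<circ> g \<circ> rflip h"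
    using AutQ_bij[OF h] by (simp add: rflip_comp inv_rflip)
  finally show ?thesis
    using rflip_AutQ[OF h] by (auto simp: conj_in_AutQ_def)
qed

lemma orbital_at_rflip:
  assumes f: "f \<in> AutQ"
  shows "orbital_at (rflip f) x = uminus ` orbital_at f (- x)"
proof -
  have "ipow f n (- y) = - ipow (rflip f) n y" for n y
    using ipow_conj[of f "rflip f" uminus n y] AutQ_bij f rflip_AutQ by (simp add: rflip_def)
  then have "ipow (rflip f) n x = - ipow f n (- x)" for n
    by (metis minus_minus)
  then show ?thesis
    unfolding orbital_at_def
  proof (intro equalityI subsetI)
    fix y assume "y \<in> {b. \<exists>m n. ipow (rflip f) m x \<le> b \<and> b \<le> ipow (rflip f) n x}"
    then obtain m n where "- ipow f m (- x) \<le> y" "y \<le> - ipow f n (- x)"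
      using \<open>\<And>n. ipow (rflip f) n x = - ipow f n (- x)\<close> by auto
    then have "- y \<in> {b. \<exists>m n. ipow f m (- x) \<le> b \<and> b \<le> ipow f n (- x)}"
      by (auto simp: minus_le_iff le_minus_iff)
    then show "y \<in> uminus ` {b. \<exists>m n. ipow f m (- x) \<le> b \<and> b \<le> ipow f n (- x)}"
      by (rule image_eqI[rotated]) simp
  next
    fix y assume "y \<in> uminus ` {b. \<exists>m n. ipow f m (- x) \<le> b \<and> b \<le> ipow f n (- x)}"
    then obtain m n where "ipow f m (- x) \<le> - y" "- y \<le> ipow f n (- x)" by auto
    then show "y \<in> {b. \<exists>m n. ipow (rflip f) m x \<le> b \<and> b \<le> ipow (rflip f) n x}"
      using \<open>\<And>n. ipow (rflip f) n x = - ipow f n (- x)\<close> by (auto simp: minus_le_iff le_minus_iff)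
  qed
qed

lemma restr_rflip: "restr (rflip f) (uminus ` S) = rflip (restr f S)"
  by (auto simp: restr_def rflip_def fun_eq_iff image_iff)

lemma below_set_uminus:
  "below_set (uminus ` A) = uminus ` above_set (A :: 'a::ordered_ab_group_add set)"
  by (auto simp: below_set_def above_set_def image_iff) (metis minus_less_iff minus_minus)+

lemma above_set_uminus:
  "above_set (uminus ` A) = uminus ` below_set (A :: 'a::ordered_ab_group_add set)"
  by (auto simp: below_set_def above_set_def image_iff) (metis less_minus_iff minus_minus)+

lemma orbital_type_rflip:
  assumes f: "f \<in> AutQ" and x: "f x \<noteq> x"
  shows "orbital_type (rflip f) (- x) = (case orbital_type f x of (up, mx, mn) \<Rightarrow> (\<not> up, mn, mx))"
  using x by (auto simp: orbital_type_def orbital_at_rflip f rflip_def below_set_uminus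
      above_set_uminus has_max_uminus has_min_uminus)

lemma orbital_chain_rflip:
  assumes f: "f \<in> AutQ" and moved: "\<And>n. f (d n) \<noteq> d n"
    and inj: "inj (\<lambda>n. orbital_at f (d n))" and decreasing: "strict_mono (\<lambda>n. - d n)"
    and same_type: "\<And>n. orbital_type f (d n) = orbital_type f (d 0)"
  shows "orbital_chain (rflip f) (\<lambda>n. - d n)"
proof
  show "rflip f \<in> AutQ" using rflip_AutQ[OF f] .
  show "rflip f (- d n) \<noteq> - d n" for n
    using moved[of n] by (simp add: rflip_def)
  show "inj (\<lambda>n. orbital_at (rflip f) (- d n))"
    using inj by (simp add: orbital_at_rflip f inj_def inj_image_eq_iff[OF inj_uminus])
  show "strict_mono (\<lambda>n. - d n)" by (rule decreasing)
  show "orbital_type (rflip f) (- d n) = orbital_type (rflip f) (- d 0)" for n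
    using orbital_type_rflip[OF f moved, of n] orbital_type_rflip[OF f moved, of 0] same_type[of n]
    by simp
qed

section \<open>Infinitely many orbitals: a conjugate factorization\<close>

lemma inj_monotone_subseq:
  fixes p :: "nat \<Rightarrow> 'a::linordered_ab_group_add"
  assumes "inj p"
  shows "\<exists>r :: nat \<Rightarrow> nat. strict_mono r \<and>
           (strict_mono (\<lambda>n. p (r n)) \<or> strict_mono (\<lambda>n. - p (r n)))"
proof -
  from seq_monosub obtain r where "strict_mono r \<and> monoseq (\<lambda>n. p (r n))" ..
  then have r: "strict_mono r" "monoseq (\<lambda>n. p (r n))" by simp_all
  have inj: "p (r m) \<noteq> p (r n)" if "m < n" for m n
    using strict_monoD[OF r(1) that] assms by (simp add: inj_eq)
  have "(\<forall>m n. m \<le> n \<longrightarrow> p (r m) \<le> p (r n)) \<or> (\<forall>m n. m \<le> n \<longrightarrow> p (r n) \<le> p (r m))"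
    using r(2) by (simp add: monoseq_def)
  then have "strict_mono (\<lambda>n. p (r n)) \<or> strict_mono (\<lambda>n. - p (r n))"
  proof
    assume "\<forall>m n. m \<le> n \<longrightarrow> p (r m) \<le> p (r n)"
    with inj show ?thesis by (auto simp: strict_mono_def order_less_le)
  next
    assume "\<forall>m n. m \<le> n \<longrightarrow> p (r n) \<le> p (r m)"
    with inj show ?thesis by (auto simp: strict_mono_def order_less_le)
  qed
  with r(1) show ?thesis by blast
qed

lemma monotone_orbital_sequence:
  assumes f: "f \<in> AutQ" and inf: "infinite (nontrivial_orbitals f)"
  obtains d :: "nat \<Rightarrow> rat" where "\<And>n. f (d n) \<noteq> d n" "inj (\<lambda>n. orbital_at f (d n))"
    "\<And>n. orbital_type f (d n) = orbital_type f (d 0)"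
    "strict_mono d \<or> strict_mono (\<lambda>n. - d n)"
proof -
  let ?N = "nontrivial_orbitals f"
  define rep where "rep U = (SOME x. x \<in> supp f \<and> orbital_at f x = U)" for U
  have rep: "rep U \<in> supp f \<and> orbital_at f (rep U) = U" if "U \<in> ?N" for U
  proof -
    have "\<exists>x. x \<in> supp f \<and> orbital_at f x = U"
      using that nontrivial_orbitals_eq[OF f] by auto
    then show ?thesis unfolding rep_def by (rule someI_ex)
  qed
  have "finite ((\<lambda>U. orbital_type f (rep U)) ` ?N)"
    by (rule finite_subset[of _ UNIV]) auto
  then obtain U0 where "infinite {U \<in> ?N. orbital_type f (rep U) = orbital_type f (rep U0)}"
    using pigeonhole_infinite[OF inf] by blast
  from infinite_countable_subset[OF this] obtain e :: "nat \<Rightarrow> rat set"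
    where "inj e \<and> range e \<subseteq> {U \<in> ?N. orbital_type f (rep U) = orbital_type f (rep U0)}" ..
  then have e_inj: "inj e"
    and e_sub: "range e \<subseteq> {U \<in> ?N. orbital_type f (rep U) = orbital_type f (rep U0)}"
    by simp_all
  have e_N: "e n \<in> ?N" and e_type: "orbital_type f (rep (e n)) = orbital_type f (rep U0)" for n
    using subsetD[OF e_sub, of "e n"] by simp_all
  have orbital_rep: "orbital_at f (rep (e n)) = e n" for n
    using rep[OF e_N] by simp
  have "inj (orbital_at f \<circ> (\<lambda>n. rep (e n)))"
    using e_inj by (simp add: comp_def orbital_rep)
  then have inj: "inj (\<lambda>n. rep (e n))"
    by (rule inj_on_imageI2)
  obtain r :: "nat \<Rightarrow> nat" where r: "strict_mono r"
    "strict_mono (\<lambda>n. rep (e (r n))) \<or> strict_mono (\<lambda>n. - rep (e (r n)))"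
    using inj_monotone_subseq[OF inj] by blast
  show thesis
  proof (rule that[of "\<lambda>n. rep (e (r n))"])
    show "f (rep (e (r n))) \<noteq> rep (e (r n))" for n
      using rep[OF e_N] by (simp add: supp_def)
    show "inj (\<lambda>n. orbital_at f (rep (e (r n))))"
      using inj_compose[OF e_inj strict_mono_imp_inj_on[OF r(1)]] by (simp add: orbital_rep comp_def)
    show "orbital_type f (rep (e (r n))) = orbital_type f (rep (e (r 0)))" for n
      using e_type by simp
  qed (use r(2) in simp)
qed

theorem infinite_nontrivial_orbitals_conjugate_cofactor:
  assumes f: "f \<in> AutQ" and inf: "infinite (nontrivial_orbitals f)"
  shows "\<exists>g\<in>AutQ. \<exists>g1\<in>AutQ. \<exists>g2\<in>AutQ. is_restriction g f \<and> is_bump g1 \<and>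
           is_orbital_elem g1 g \<and> g = g1 \<circ> g2 \<and> conj_in_AutQ g g2"
proof -
  obtain d :: "nat \<Rightarrow> rat" where moved: "\<And>n. f (d n) \<noteq> d n" and inj: "inj (\<lambda>n. orbital_at f (d n))"
    and same_type: "\<And>n. orbital_type f (d n) = orbital_type f (d 0)"
    and mono: "strict_mono d \<or> strict_mono (\<lambda>n. - d n)"
    using monotone_orbital_sequence[OF f inf] by blast
  let ?S = "\<Union>i. orbital_at f (d (Suc (2 * i)))" and ?S2 = "\<Union>i. orbital_at f (d (Suc (2 * Suc i)))"
  have "conj_in_AutQ (restr f ?S) (restr f ?S2)"
  proof (cases "strict_mono d")
    case True
    interpret orbital_chain f d
      by unfold_locales (use f moved inj True same_type in auto)
    show ?thesis using conj_restr_shift .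
  next
    case False
    with mono have "strict_mono (\<lambda>n. - d n)" by simp
    from orbital_chain_rflip[OF f moved inj this same_type]
    interpret r: orbital_chain "rflip f" "\<lambda>n. - d n" .
    have reflect: "(\<Union>i. orbital_at (rflip f) (- d (Suc (2 * i)))) = uminus ` ?S"
      "(\<Union>i. orbital_at (rflip f) (- d (Suc (2 * Suc i)))) = uminus ` ?S2"
      by (auto simp: orbital_at_rflip f)
    have "conj_in_AutQ (rflip (restr f ?S)) (rflip (restr f ?S2))"
      using r.conj_restr_shift unfolding reflect restr_rflip .
    then show ?thesis by (rule conj_in_AutQ_rflip)
  qed
  moreover have "inj (\<lambda>i. orbital_at f (d (Suc (2 * i))))"
    using inj_compose[OF inj, of "\<lambda>i. Suc (2 * i)"] by (simp add: inj_def comp_def)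
  ultimately show ?thesis
    using conjugate_cofactor_of_orbital_sequence[of f "\<lambda>i. d (Suc (2 * i))"] f moved by simp
qed

theorem corollary2p3:
  assumes "f \<in> AutQ"
  shows "(\<not> (\<exists>g \<in> AutQ. \<exists>g1 \<in> AutQ. \<exists>g2 \<in> AutQ.
              is_restriction g f \<and> is_bump g1 \<and> is_orbital_elem g1 g \<and>
              g = g1 \<circ> g2 \<and> conj_in_AutQ g g2))
         \<longleftrightarrow> finite (nontrivial_orbitals f)"
proof
  assume "\<not> (\<exists>g \<in> AutQ. \<exists>g1 \<in> AutQ. \<exists>g2 \<in> AutQ.
              is_restriction g f \<and> is_bump g1 \<and> is_orbital_elem g1 g \<and>
              g = g1 \<circ> g2 \<and> conj_in_AutQ g g2)"
  then show "finite (nontrivial_orbitals f)"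
    using infinite_nontrivial_orbitals_conjugate_cofactor[OF assms] by blast
next
  assume "finite (nontrivial_orbitals f)"
  then show "\<not> (\<exists>g \<in> AutQ. \<exists>g1 \<in> AutQ. \<exists>g2 \<in> AutQ.
              is_restriction g f \<and> is_bump g1 \<and> is_orbital_elem g1 g \<and>
              g = g1 \<circ> g2 \<and> conj_in_AutQ g g2)"
    using finite_nontrivial_orbitals_no_conjugate_cofactor[OF assms] by blast
qed

end
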